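(* Let $E$ be a locally complete lcHs over $\mathbb{K}$, let $G\subset E'$ be a separating linear subspace, and let $\mathcal{F}(\Omega)$ and $\mathcal{F}(\Omega,E)$ be $\varepsilon$-into-compatible. Let $(T^{E},T^{\mathbb{K}})$ be a consistent and strong family for $(\mathcal{F},E)$, $\nu\colon\omega\to(0,\infty)$ a weight, and suppose $\mathcal{F}\nu(\Omega)$ is a Banach space whose closed unit ball $B_{\mathcal{F}\nu}$ is a compact subset of $\mathcal{F}(\Omega)$. Let $U\subset\omega$ fix the topology in $\mathcal{F}\nu(\Omega)$. Then for every $f\in\mathcal{F}\nu_{G}(U,E)$ such that $\{f(x)\nu(x): x\in U\}$ is bounded in $E$ there exists $F\in\mathcal{F}_{\varepsilon}\nu(\Omega,E)$ with $T^{E}(F)(x)=f(x)$ for all $x\in U$; i.e. the restriction map $R_{U,G}\colon\mathcal{F}_\varepsilon\nu(\Omega,E)\to\mathcal{F}\nu_G(U,E)_{lb}$, $F\mapsto(T^E(F)(x))_{x\in U}$, is surjective.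
   Context: $\mathbb{K}\in\{\mathbb{R},\mathbb{C}\}$; "lcHs" means locally convex Hausdorff space over $\mathbb{K}$; $E$ carries a directed fundamental system of seminorms $(p_\alpha)_{\alpha\in\mathfrak{A}}$ and $E'$ is its dual. $E$ is locally complete if for every closed bounded absolutely convex $D\subset E$ the space $\bigcup_n nD$ normed by the gauge of $D$ is a Banach space. A subspace $G\subset E'$ is separating if $e'(x)=0$ for all $e'\in G$ implies $x=0$. Framework: Let $\Omega,\omega$ be non-empty sets. For an lcHs $F$, $F'_\kappa$ is $F'$ with the topology of uniform convergence on absolutely convex compact subsets of $F$, and $F\varepsilon E:=L_e(F'_\kappa,E)$ is the space of continuous linear maps $F'_\kappa\to E$ with the topology of uniform convergence on equicontinuous subsets of $F'$. Let $\mathcal{F}(\Omega)\subset\mathbb{K}^\Omega$ and $\mathcal{F}(\Omega,E)\subset E^\Omega$ be linear subspaces carrying locally convex Hausdorff topologies with $\delta_x\in\mathcal{F}(\Omega)'$ for all $x\in\Omega$. Define $S\colon\mathcal{F}(\Omega)\varepsilon E\to E^\Omega$, $S(u)(x):=u(\delta_x)$. The spaces are $\varepsilon$-into-compatible if $S$ maps into $\mathcal{F}(\Omega,E)$ and is a linear topological isomorphism onto its range. Let $T^{\mathbb{K}}\colon\mathcal{F}(\Omega)\to\mathbb{K}^\omega$ and $T^{E}\colon\mathcal{F}(\Omega,E)\to E^\omega$ be linear and $T^{\mathbb{K}}_x:=\delta_x\circ T^{\mathbb{K}}$. $(T^E,T^{\mathbb{K}})$ is consistent for $(\mathcal{F},E)$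 if for every $u\in\mathcal{F}(\Omega)\varepsilon E$ we have $S(u)\in\mathcal{F}(\Omega,E)$ and for all $x\in\omega$: $T^{\mathbb{K}}_x\in\mathcal{F}(\Omega)'$ and $T^{E}(S(u))(x)=u(T^{\mathbb{K}}_x)$. It is strong for $(\mathcal{F},E)$ if for all $e'\in E'$, $f\in\mathcal{F}(\Omega,E)$: $e'\circ f\in\mathcal{F}(\Omega)$ and $T^{\mathbb{K}}(e'\circ f)(x)=e'(T^E(f)(x))$ for all $x\in\omega$. For a weight $\nu\colon\omega\to(0,\infty)$ set $\mathcal{F}\nu(\Omega,E):=\{f\in\mathcal{F}(\Omega,E): |f|_\alpha:=\sup_{x\in\omega}p_\alpha(T^E(f)(x))\nu(x)<\infty\ \forall\alpha\}$ with the topology of these seminorms, and $\mathcal{F}\nu(\Omega):=\{f\in\mathcal{F}(\Omega): |f|_{\mathcal{F}\nu}:=\sup_{x\in\omega}|T^{\mathbb{K}}(f)(x)|\nu(x)<\infty\}$. Let $B_{\mathcal{F}\nu}$ be the closed unit ball of $\mathcal{F}\nu(\Omega)$, $B^{\circ\mathcal{F}'}_{\mathcal{F}\nu}:=\{y'\in\mathcal{F}(\Omega)':|y'(f)|\le1\ \forall f\in B_{\mathcal{F}\nu}\}$ and $\mathcal{F}_\varepsilon\nu(\Omega,E):=S(\{u\in\mathcal{F}(\Omega)\varepsilon E: u(B^{\circ\mathcal{F}'}_{\mathcal{F}\nu})\text{ is bounded in }E\})$. A set $U\subset\omega$ fixes the topology in $\mathcal{F}\nu(\Omega)$ if there is $C>0$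 with $|f|_{\mathcal{F}\nu}\le C\sup_{x\in U}|T^{\mathbb{K}}(f)(x)|\nu(x)$ for all $f\in\mathcal{F}\nu(\Omega)$. $\mathcal{F}\nu_G(U,E)$ is the space of functions $f\colon U\to E$ such that for every $e'\in G$ there is $f_{e'}\in\mathcal{F}\nu(\Omega)$ with $T^{\mathbb{K}}(f_{e'})(x)=e'(f(x))$ for all $x\in U$; $\mathcal{F}\nu_G(U,E)_{lb}$ is the subspace of those $f$ for which $\{f(x)\nu(x):x\in U\}$ is bounded in $E$. *)

theory Defs
  imports "HOL-Analysis.Analysis" "HOL-Library.Function_Algebras"
begin

(* Scalars: 'k :: {real_normed_field, euclidean_space}; a finite-dimensional real normed
   field is (isometrically) R or C, so this encodes K in {R, C}.
   A locally convex Hausdorff space is encoded as a linear subspace V of a 'k-vector space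
   (scalar multiplication sc) together with a family q of seminorms on V that
   separates points; all topological notions are the ones induced by the seminorms. *)

definition fscale :: "('k \<Rightarrow> 'b \<Rightarrow> 'b) \<Rightarrow> 'k \<Rightarrow> ('a \<Rightarrow> 'b) \<Rightarrow> ('a \<Rightarrow> 'b)" where
  "fscale sc c f = (\<lambda>x. sc c (f x))"

definition lin_subspace :: "('k::field \<Rightarrow> 'v::ab_group_add \<Rightarrow> 'v) \<Rightarrow> 'v set \<Rightarrow> bool" where
  "lin_subspace sc V \<longleftrightarrow> 0 \<in> V \<and> (\<forall>x\<in>V. \<forall>y\<in>V. x + y \<in> V) \<and> (\<forall>c. \<forall>x\<in>V. sc c x \<in> V)"

definition is_seminorm_on :: "('k::real_normed_field \<Rightarrow> 'v::ab_group_add \<Rightarrow> 'v) \<Rightarrow> 'v set \<Rightarrow> ('v \<Rightarrow> real) \<Rightarrow> bool" where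
  "is_seminorm_on sc V q \<longleftrightarrow> (\<forall>x\<in>V. \<forall>y\<in>V. q (x + y) \<le> q x + q y) \<and> (\<forall>c. \<forall>x\<in>V. q (sc c x) = norm c * q x)"

definition lcHs :: "('k::real_normed_field \<Rightarrow> 'v::ab_group_add \<Rightarrow> 'v) \<Rightarrow> 'v set \<Rightarrow> ('i \<Rightarrow> 'v \<Rightarrow> real) \<Rightarrow> bool" where
  "lcHs sc V q \<longleftrightarrow> lin_subspace sc V \<and> (\<forall>i. is_seminorm_on sc V (q i)) \<and> (\<forall>x\<in>V. (\<forall>i. q i x = 0) \<longrightarrow> x = 0)"

definition directed_family :: "('i \<Rightarrow> 'v \<Rightarrow> real) \<Rightarrow> 'v set \<Rightarrow> bool" where
  "directed_family q V \<longleftrightarrow> (\<forall>i j. \<exists>k. \<forall>x\<in>V. max (q i x) (q j x) \<le> q k x)"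

definition lin_on :: "('k \<Rightarrow> 'v::plus \<Rightarrow> 'v) \<Rightarrow> ('k \<Rightarrow> 'w::plus \<Rightarrow> 'w) \<Rightarrow> 'v set \<Rightarrow> ('v \<Rightarrow> 'w) \<Rightarrow> bool" where
  "lin_on sc1 sc2 V T \<longleftrightarrow> (\<forall>x\<in>V. \<forall>y\<in>V. T (x + y) = T x + T y) \<and> (\<forall>c. \<forall>x\<in>V. T (sc1 c x) = sc2 c (T x))"

text \<open>Continuity (of a map, linear in applications) between seminormed spaces.\<close>
definition sn_cont :: "'v set \<Rightarrow> ('i \<Rightarrow> 'v \<Rightarrow> real) \<Rightarrow> ('j \<Rightarrow> 'w \<Rightarrow> real) \<Rightarrow> ('v \<Rightarrow> 'w) \<Rightarrow> bool" where
  "sn_cont V q r T \<longleftrightarrow> (\<forall>j. \<exists>J C. finite J \<and> (\<forall>x\<in>V. r j (T x) \<le> C * (\<Sum>i\<in>J. q i x)))"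

definition sn_bounded :: "'v set \<Rightarrow> ('i \<Rightarrow> 'v \<Rightarrow> real) \<Rightarrow> 'v set \<Rightarrow> bool" where
  "sn_bounded V q B \<longleftrightarrow> B \<subseteq> V \<and> (\<forall>i. \<exists>C. \<forall>x\<in>B. q i x \<le> C)"

definition sn_open :: "'v::ab_group_add set \<Rightarrow> ('i \<Rightarrow> 'v \<Rightarrow> real) \<Rightarrow> 'v set \<Rightarrow> bool" where
  "sn_open V q U \<longleftrightarrow> U \<subseteq> V \<and>
     (\<forall>x\<in>U. \<exists>J \<epsilon>. finite J \<and> \<epsilon> > 0 \<and> {y\<in>V. (\<Sum>i\<in>J. q i (y - x)) < \<epsilon>} \<subseteq> U)"

definition sn_closed :: "'v::ab_group_add set \<Rightarrow> ('i \<Rightarrow> 'v \<Rightarrow> real) \<Rightarrow> 'v set \<Rightarrow> bool" where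
  "sn_closed V q D \<longleftrightarrow> D \<subseteq> V \<and> sn_open V q (V - D)"

definition sn_compact :: "'v::ab_group_add set \<Rightarrow> ('i \<Rightarrow> 'v \<Rightarrow> real) \<Rightarrow> 'v set \<Rightarrow> bool" where
  "sn_compact V q K \<longleftrightarrow> K \<subseteq> V \<and>
     (\<forall>\<U>. (\<forall>W\<in>\<U>. sn_open V q W) \<and> K \<subseteq> \<Union>\<U> \<longrightarrow> (\<exists>\<V>\<subseteq>\<U>. finite \<V> \<and> K \<subseteq> \<Union>\<V>))"

definition abs_convex :: "('k::real_normed_field \<Rightarrow> 'v::ab_group_add \<Rightarrow> 'v) \<Rightarrow> 'v set \<Rightarrow> bool" where
  "abs_convex sc K \<longleftrightarrow> (\<forall>x\<in>K. \<forall>y\<in>K. \<forall>a b. norm a + norm b \<le> 1 \<longrightarrow> sc a x + sc b y \<in> K)"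

definition sn_dual :: "('k::real_normed_field \<Rightarrow> 'v::ab_group_add \<Rightarrow> 'v) \<Rightarrow> 'v set \<Rightarrow> ('i \<Rightarrow> 'v \<Rightarrow> real) \<Rightarrow> ('v \<Rightarrow> 'k) set" where
  "sn_dual sc V q = {y. lin_on sc (*) V y \<and> sn_cont V q (\<lambda>_::unit. norm) y \<and> (\<forall>x. x \<notin> V \<longrightarrow> y x = 0)}"

definition sn_banach :: "('k::real_normed_field \<Rightarrow> 'v::ab_group_add \<Rightarrow> 'v) \<Rightarrow> 'v set \<Rightarrow> ('v \<Rightarrow> real) \<Rightarrow> bool" where
  "sn_banach sc V \<mu> \<longleftrightarrow> lin_subspace sc V \<and> is_seminorm_on sc V \<mu> \<and> (\<forall>x\<in>V. \<mu> x = 0 \<longrightarrow> x = 0) \<and>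
     (\<forall>s. (\<forall>n. s n \<in> V) \<and> (\<forall>\<epsilon>>0. \<exists>N. \<forall>m\<ge>N. \<forall>n\<ge>N. \<mu> (s m - s n) < \<epsilon>)
          \<longrightarrow> (\<exists>x\<in>V. (\<lambda>n. \<mu> (s n - x)) \<longlonglongrightarrow> 0))"

definition gauge_fn :: "('k::real_normed_field \<Rightarrow> 'v \<Rightarrow> 'v) \<Rightarrow> 'v set \<Rightarrow> 'v \<Rightarrow> real" where
  "gauge_fn sc D x = Inf {t::real. t > 0 \<and> x \<in> sc (of_real t) ` D}"

definition locally_complete :: "('k::real_normed_field \<Rightarrow> 'v::ab_group_add \<Rightarrow> 'v) \<Rightarrow> ('a \<Rightarrow> 'v \<Rightarrow> real) \<Rightarrow> bool" where
  "locally_complete sc p \<longleftrightarrow> (\<forall>D. D \<noteq> {} \<and> sn_closed UNIV p D \<and> sn_bounded UNIV p D \<and> abs_convex sc D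
      \<longrightarrow> sn_banach sc (\<Union>n::nat. sc (of_nat n) ` D) (gauge_fn sc D))"

definition separating :: "('v::zero \<Rightarrow> 'k::zero) set \<Rightarrow> bool" where
  "separating G \<longleftrightarrow> (\<forall>x. (\<forall>e'\<in>G. e' x = 0) \<longrightarrow> x = 0)"

text \<open>Seminorms of F(Omega)'_kappa, indexed by subsets K (only absolutely convex compact K count).\<close>
definition kappa_sn :: "('w \<Rightarrow> 'k::{real_normed_field}) set \<Rightarrow> ('i \<Rightarrow> ('w \<Rightarrow> 'k) \<Rightarrow> real)
    \<Rightarrow> ('w \<Rightarrow> 'k) set \<Rightarrow> (('w \<Rightarrow> 'k) \<Rightarrow> 'k) \<Rightarrow> real" where
  "kappa_sn Fs qF K y = (if sn_compact Fs qF K \<and> abs_convex (fscale (*)) K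
       then Sup (insert 0 ((\<lambda>f. norm (y f)) ` K)) else 0)"

definition Fdual :: "('w \<Rightarrow> 'k::real_normed_field) set \<Rightarrow> ('i \<Rightarrow> ('w \<Rightarrow> 'k) \<Rightarrow> real) \<Rightarrow> (('w \<Rightarrow> 'k) \<Rightarrow> 'k) set" where
  "Fdual Fs qF = sn_dual (fscale (*)) Fs qF"

text \<open>F(Omega) epsilon E = L(F(Omega)'_kappa, E) (maps extended by 0 outside the dual).\<close>
definition eps_prod :: "('k::real_normed_field \<Rightarrow> 'e::ab_group_add \<Rightarrow> 'e) \<Rightarrow> ('a \<Rightarrow> 'e \<Rightarrow> real)
    \<Rightarrow> ('w \<Rightarrow> 'k) set \<Rightarrow> ('i \<Rightarrow> ('w \<Rightarrow> 'k) \<Rightarrow> real) \<Rightarrow> ((('w \<Rightarrow> 'k) \<Rightarrow> 'k) \<Rightarrow> 'e) set" where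
  "eps_prod smul p Fs qF = {u. lin_on (fscale (*)) smul (Fdual Fs qF) u
      \<and> sn_cont (Fdual Fs qF) (kappa_sn Fs qF) p u \<and> (\<forall>y. y \<notin> Fdual Fs qF \<longrightarrow> u y = 0)}"

definition equicont :: "('w \<Rightarrow> 'k::real_normed_field) set \<Rightarrow> ('i \<Rightarrow> ('w \<Rightarrow> 'k) \<Rightarrow> real) \<Rightarrow> (('w \<Rightarrow> 'k) \<Rightarrow> 'k) set \<Rightarrow> bool" where
  "equicont Fs qF M \<longleftrightarrow> M \<subseteq> Fdual Fs qF \<and>
     (\<exists>J C. finite J \<and> (\<forall>y\<in>M. \<forall>f\<in>Fs. norm (y f) \<le> C * (\<Sum>i\<in>J. qF i f)))"

text \<open>Seminorms of F(Omega) epsilon E: uniform convergence on equicontinuous sets.\<close>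
definition eps_sn :: "('w \<Rightarrow> 'k::real_normed_field) set \<Rightarrow> ('i \<Rightarrow> ('w \<Rightarrow> 'k) \<Rightarrow> real) \<Rightarrow> ('a \<Rightarrow> 'e \<Rightarrow> real)
    \<Rightarrow> (('w \<Rightarrow> 'k) \<Rightarrow> 'k) set \<times> 'a \<Rightarrow> ((('w \<Rightarrow> 'k) \<Rightarrow> 'k) \<Rightarrow> 'e) \<Rightarrow> real" where
  "eps_sn Fs qF p Ma u = (if equicont Fs qF (fst Ma)
       then Sup (insert 0 ((\<lambda>y. p (snd Ma) (u y)) ` fst Ma)) else 0)"

definition delta :: "('w \<Rightarrow> 'k::zero) set \<Rightarrow> 'w \<Rightarrow> ('w \<Rightarrow> 'k) \<Rightarrow> 'k" where
  "delta Fs x = (\<lambda>f. if f \<in> Fs then f x else 0)"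

definition S_map :: "('w \<Rightarrow> 'k::zero) set \<Rightarrow> ((('w \<Rightarrow> 'k) \<Rightarrow> 'k) \<Rightarrow> 'e) \<Rightarrow> 'w \<Rightarrow> 'e" where
  "S_map Fs u = (\<lambda>x. u (delta Fs x))"

definition eps_into_compatible :: "('k::real_normed_field \<Rightarrow> 'e::ab_group_add \<Rightarrow> 'e) \<Rightarrow> ('a \<Rightarrow> 'e \<Rightarrow> real)
    \<Rightarrow> ('w \<Rightarrow> 'k) set \<Rightarrow> ('i \<Rightarrow> ('w \<Rightarrow> 'k) \<Rightarrow> real) \<Rightarrow> ('w \<Rightarrow> 'e) set \<Rightarrow> ('j \<Rightarrow> ('w \<Rightarrow> 'e) \<Rightarrow> real) \<Rightarrow> bool" where
  "eps_into_compatible smul p Fs qF FE qFE \<longleftrightarrow>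
     (\<forall>u\<in>eps_prod smul p Fs qF. S_map Fs u \<in> FE)
     \<and> inj_on (S_map Fs) (eps_prod smul p Fs qF)
     \<and> sn_cont (eps_prod smul p Fs qF) (eps_sn Fs qF p) qFE (S_map Fs)
     \<and> (\<forall>j. \<exists>J C. finite J \<and> (\<forall>u\<in>eps_prod smul p Fs qF. eps_sn Fs qF p j u \<le> C * (\<Sum>i\<in>J. qFE i (S_map Fs u))))"

definition TKx :: "('w \<Rightarrow> 'k::zero) set \<Rightarrow> (('w \<Rightarrow> 'k) \<Rightarrow> 'x \<Rightarrow> 'k) \<Rightarrow> 'x \<Rightarrow> ('w \<Rightarrow> 'k) \<Rightarrow> 'k" where
  "TKx Fs TK x = (\<lambda>f. if f \<in> Fs then TK f x else 0)"

definition consistent_fam :: "('k::real_normed_field \<Rightarrow> 'e::ab_group_add \<Rightarrow> 'e) \<Rightarrow> ('a \<Rightarrow> 'e \<Rightarrow> real)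
    \<Rightarrow> ('w \<Rightarrow> 'k) set \<Rightarrow> ('i \<Rightarrow> ('w \<Rightarrow> 'k) \<Rightarrow> real) \<Rightarrow> ('w \<Rightarrow> 'e) set
    \<Rightarrow> (('w \<Rightarrow> 'e) \<Rightarrow> 'x \<Rightarrow> 'e) \<Rightarrow> (('w \<Rightarrow> 'k) \<Rightarrow> 'x \<Rightarrow> 'k) \<Rightarrow> bool" where
  "consistent_fam smul p Fs qF FE TE TK \<longleftrightarrow>
     (\<forall>u\<in>eps_prod smul p Fs qF. S_map Fs u \<in> FE \<and>
        (\<forall>x. TKx Fs TK x \<in> Fdual Fs qF \<and> TE (S_map Fs u) x = u (TKx Fs TK x)))"

definition strong_fam :: "('k::real_normed_field \<Rightarrow> 'e::ab_group_add \<Rightarrow> 'e) \<Rightarrow> ('a \<Rightarrow> 'e \<Rightarrow> real)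
    \<Rightarrow> ('w \<Rightarrow> 'k) set \<Rightarrow> ('w \<Rightarrow> 'e) set
    \<Rightarrow> (('w \<Rightarrow> 'e) \<Rightarrow> 'x \<Rightarrow> 'e) \<Rightarrow> (('w \<Rightarrow> 'k) \<Rightarrow> 'x \<Rightarrow> 'k) \<Rightarrow> bool" where
  "strong_fam smul p Fs FE TE TK \<longleftrightarrow>
     (\<forall>e'\<in>sn_dual smul UNIV p. \<forall>f\<in>FE. e' \<circ> f \<in> Fs \<and> (\<forall>x. TK (e' \<circ> f) x = e' (TE f x)))"

definition Fnu :: "('w \<Rightarrow> 'k::real_normed_field) set \<Rightarrow> (('w \<Rightarrow> 'k) \<Rightarrow> 'x \<Rightarrow> 'k) \<Rightarrow> ('x \<Rightarrow> real) \<Rightarrow> ('w \<Rightarrow> 'k) set" where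
  "Fnu Fs TK \<nu> = {f\<in>Fs. bdd_above (range (\<lambda>x. norm (TK f x) * \<nu> x))}"

definition Fnu_norm :: "(('w \<Rightarrow> 'k::real_normed_field) \<Rightarrow> 'x \<Rightarrow> 'k) \<Rightarrow> ('x \<Rightarrow> real) \<Rightarrow> ('w \<Rightarrow> 'k) \<Rightarrow> real" where
  "Fnu_norm TK \<nu> f = (SUP x. norm (TK f x) * \<nu> x)"

definition ball_Fnu :: "('w \<Rightarrow> 'k::real_normed_field) set \<Rightarrow> (('w \<Rightarrow> 'k) \<Rightarrow> 'x \<Rightarrow> 'k) \<Rightarrow> ('x \<Rightarrow> real) \<Rightarrow> ('w \<Rightarrow> 'k) set" where
  "ball_Fnu Fs TK \<nu> = {f\<in>Fnu Fs TK \<nu>. Fnu_norm TK \<nu> f \<le> 1}"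

definition polar_ball :: "('w \<Rightarrow> 'k::real_normed_field) set \<Rightarrow> ('i \<Rightarrow> ('w \<Rightarrow> 'k) \<Rightarrow> real)
    \<Rightarrow> (('w \<Rightarrow> 'k) \<Rightarrow> 'x \<Rightarrow> 'k) \<Rightarrow> ('x \<Rightarrow> real) \<Rightarrow> (('w \<Rightarrow> 'k) \<Rightarrow> 'k) set" where
  "polar_ball Fs qF TK \<nu> = {y\<in>Fdual Fs qF. \<forall>f\<in>ball_Fnu Fs TK \<nu>. norm (y f) \<le> 1}"

definition F_eps_nu :: "('k::real_normed_field \<Rightarrow> 'e::ab_group_add \<Rightarrow> 'e) \<Rightarrow> ('a \<Rightarrow> 'e \<Rightarrow> real)
    \<Rightarrow> ('w \<Rightarrow> 'k) set \<Rightarrow> ('i \<Rightarrow> ('w \<Rightarrow> 'k) \<Rightarrow> real)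
    \<Rightarrow> (('w \<Rightarrow> 'k) \<Rightarrow> 'x \<Rightarrow> 'k) \<Rightarrow> ('x \<Rightarrow> real) \<Rightarrow> ('w \<Rightarrow> 'e) set" where
  "F_eps_nu smul p Fs qF TK \<nu> =
     S_map Fs ` {u\<in>eps_prod smul p Fs qF. sn_bounded UNIV p (u ` polar_ball Fs qF TK \<nu>)}"

definition fixes_topology :: "('w \<Rightarrow> 'k::real_normed_field) set \<Rightarrow> (('w \<Rightarrow> 'k) \<Rightarrow> 'x \<Rightarrow> 'k) \<Rightarrow> ('x \<Rightarrow> real) \<Rightarrow> 'x set \<Rightarrow> bool" where
  "fixes_topology Fs TK \<nu> U \<longleftrightarrow> (\<exists>C>0. \<forall>f\<in>Fnu Fs TK \<nu>.
      Fnu_norm TK \<nu> f \<le> C * Sup (insert 0 ((\<lambda>x. norm (TK f x) * \<nu> x) ` U)))"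

definition FnuG :: "('w \<Rightarrow> 'k::real_normed_field) set \<Rightarrow> (('w \<Rightarrow> 'k) \<Rightarrow> 'x \<Rightarrow> 'k) \<Rightarrow> ('x \<Rightarrow> real)
    \<Rightarrow> ('e \<Rightarrow> 'k) set \<Rightarrow> 'x set \<Rightarrow> ('x \<Rightarrow> 'e) set" where
  "FnuG Fs TK \<nu> G U = {f. \<forall>e'\<in>G. \<exists>g\<in>Fnu Fs TK \<nu>. \<forall>x\<in>U. TK g x = e' (f x)}"

definition FnuG_lb :: "('k::real_normed_field \<Rightarrow> 'e \<Rightarrow> 'e) \<Rightarrow> ('a \<Rightarrow> 'e \<Rightarrow> real)
    \<Rightarrow> ('w \<Rightarrow> 'k) set \<Rightarrow> (('w \<Rightarrow> 'k) \<Rightarrow> 'x \<Rightarrow> 'k) \<Rightarrow> ('x \<Rightarrow> real)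
    \<Rightarrow> ('e \<Rightarrow> 'k) set \<Rightarrow> 'x set \<Rightarrow> ('x \<Rightarrow> 'e) set" where
  "FnuG_lb smul p Fs TK \<nu> G U = {f\<in>FnuG Fs TK \<nu> G U.
      sn_bounded UNIV p ((\<lambda>x. smul (of_real (\<nu> x)) (f x)) ` U)}"

end

theory Submission
  imports Defs
begin

text \<open>
  Let \<open>y\<close> be a continuous functional on \<open>\<F>(\<Omega>)\<close>. As the unit ball \<open>B\<close> of \<open>\<F>\<nu>(\<Omega>)\<close> is compact
  in \<open>\<F>(\<Omega>)\<close>, \<open>y\<close> is bounded on \<open>B\<close>, say by \<open>\<sigma>(y)\<close>. Because \<open>U\<close> fixes the topology, compactness
  of \<open>B\<close> and a finite-dimensional Hahn--Banach argument produce finitely many \<open>x \<in> U\<close> and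
  coefficients with \<open>\<Sum>|a\<^sub>x| \<le> C \<sigma>(y)\<close> such that \<open>y - \<Sum> a\<^sub>x \<nu>(x) T\<^sub>x\<close> is bounded by \<open>\<sigma>(y)/2\<close> on \<open>B\<close>.
  Iterating on the residual expands \<open>y\<close> into a series of weighted point evaluations with
  geometrically decaying coefficients. Replacing \<open>\<nu>(x) T\<^sub>x\<close> by \<open>\<nu>(x) f(x)\<close> gives a series in the
  normed space spanned by the bounded disc containing \<open>{\<nu>(x) f(x) | x \<in> U}\<close>, which is complete by
  local completeness of \<open>E\<close>. Its sum \<open>u(y)\<close> satisfies \<open>e'(u(y)) = y(f\<^bsub>e'\<^esub>)\<close> for all \<open>e' \<in> G\<close>, so \<open>u\<close> is
  well defined and linear because \<open>G\<close> separates points, it is bounded on the polar of \<open>B\<close>, and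
  \<open>F = S(u)\<close> restricts to \<open>f\<close> on \<open>U\<close> by consistency.
\<close>

section \<open>Modules, subspaces and seminorms\<close>

lemma module_fscale: "module sc \<Longrightarrow> module (fscale sc)"
  unfolding module_def fscale_def by (simp add: fun_eq_iff)

lemma module_mult: "module ((*) :: 'k::field \<Rightarrow> 'k \<Rightarrow> 'k)"
  by unfold_locales (simp_all add: algebra_simps)

lemma lin_subspace_scale: "lin_subspace sc V \<Longrightarrow> x \<in> V \<Longrightarrow> sc c x \<in> V"
  by (simp add: lin_subspace_def)

lemma seminorm_scale: "is_seminorm_on sc V q \<Longrightarrow> x \<in> V \<Longrightarrow> q (sc c x) = norm c * q x"
  by (simp add: is_seminorm_on_def)

context
  fixes sc :: "'k::real_normed_field \<Rightarrow> 'v::ab_group_add \<Rightarrow> 'v"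
  assumes module: "module sc"
begin

lemma scale_minus_one: "sc (- 1) x = - x"
  using module.scale_minus_left[OF module, of 1] module.scale_one[OF module] by simp

lemma lin_subspace_iff_subspace: "lin_subspace sc V \<longleftrightarrow> module.subspace sc V"
  unfolding lin_subspace_def module.subspace_def[OF module] by blast

lemma lin_subspace_diff: "lin_subspace sc V \<Longrightarrow> x \<in> V \<Longrightarrow> y \<in> V \<Longrightarrow> x - y \<in> V"
  using module.subspace_diff[OF module] by (simp add: lin_subspace_iff_subspace)

lemma lin_subspace_sum: "lin_subspace sc V \<Longrightarrow> (\<And>i. i \<in> I \<Longrightarrow> f i \<in> V) \<Longrightarrow> sum f I \<in> V"
  unfolding lin_subspace_iff_subspace by (rule module.subspace_sum[OF module])

lemma lin_on_zero:
  assumes "lin_subspace sc V" "lin_on sc (*) V T"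
  shows "T 0 = (0::'k)"
  using assms module.scale_zero_left[OF module, of 0] unfolding lin_subspace_def lin_on_def
  by (metis mult_zero_left)

lemma lin_on_diff:
  assumes V: "lin_subspace sc V" and T: "lin_on sc (*) V T" and "x \<in> V" "y \<in> V"
  shows "T (x - y) = T x - (T y :: 'k)"
proof -
  have "T x = T ((x - y) + y)" by simp
  also have "\<dots> = T (x - y) + T y" using T assms lin_subspace_diff[OF V] unfolding lin_on_def by blast
  finally show ?thesis by simp
qed

lemma lin_on_sum:
  assumes V: "lin_subspace sc V" and T: "lin_on sc (*) V T" and "\<And>i. i \<in> I \<Longrightarrow> f i \<in> V"
  shows "T (sum f I) = (\<Sum>i\<in>I. T (f i) :: 'k)"
  using assms(3)
proof (induction I rule: infinite_finite_induct)
  case (insert i I)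
  then show ?case using T lin_subspace_sum[OF V, of I f] unfolding lin_on_def by simp
qed (use lin_on_zero[OF V T] in simp_all)

lemma seminorm_zero: "lin_subspace sc V \<Longrightarrow> is_seminorm_on sc V q \<Longrightarrow> q 0 = 0"
  using module.scale_zero_left[OF module, of 0] unfolding lin_subspace_def is_seminorm_on_def
  by (metis mult_zero_left norm_zero)

lemma seminorm_nonneg:
  assumes V: "lin_subspace sc V" and q: "is_seminorm_on sc V q" and x: "x \<in> V"
  shows "0 \<le> q x"
proof -
  have "- x \<in> V" and "q (- x) = q x"
    using x V q scale_minus_one[of x] unfolding lin_subspace_def is_seminorm_on_def
    by (metis, metis norm_minus_cancel norm_one mult_1)
  then have "q (x + - x) \<le> 2 * q x" using q x unfolding is_seminorm_on_def by fastforce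
  then show ?thesis using seminorm_zero[OF V q] by simp
qed

lemma seminorm_diff_commute:
  assumes V: "lin_subspace sc V" and q: "is_seminorm_on sc V q" and "x \<in> V" "y \<in> V"
  shows "q (x - y) = q (y - x)"
  using q lin_subspace_diff[OF V assms(4,3)] scale_minus_one[of "y - x"]
  unfolding is_seminorm_on_def by (metis minus_diff_eq norm_minus_cancel norm_one mult_1)

lemma seminorm_sum_le:
  assumes V: "lin_subspace sc V" and q: "is_seminorm_on sc V q" and "\<And>i. i \<in> I \<Longrightarrow> f i \<in> V"
  shows "q (sum f I) \<le> (\<Sum>i\<in>I. q (f i))"
  using assms(3)
proof (induction I rule: infinite_finite_induct)
  case (insert i I)
  have "q (f i + sum f I) \<le> q (f i) + q (sum f I)"
    using q insert.prems lin_subspace_sum[OF V, of I f] unfolding is_seminorm_on_def by simp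
  then show ?case using insert by simp
qed (use seminorm_zero[OF V q] in simp_all)

end

section \<open>Finite-dimensional Hahn--Banach theorem\<close>

definition real_linear_on :: "('v::real_vector \<Rightarrow> real) \<Rightarrow> 'v set \<Rightarrow> bool" where
  "real_linear_on \<rho> V \<longleftrightarrow>
     (\<forall>u\<in>V. \<forall>v\<in>V. \<rho> (u + v) = \<rho> u + \<rho> v) \<and> (\<forall>c. \<forall>u\<in>V. \<rho> (c *\<^sub>R u) = c * \<rho> u)"

definition sublinear_on :: "('v::real_vector \<Rightarrow> real) \<Rightarrow> 'v set \<Rightarrow> bool" where
  "sublinear_on r V \<longleftrightarrow>
     (\<forall>u\<in>V. \<forall>v\<in>V. r (u + v) \<le> r u + r v) \<and> (\<forall>c\<ge>0. \<forall>u\<in>V. r (c *\<^sub>R u) = c * r u)"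

lemma sublinear_on_subset: "sublinear_on r V \<Longrightarrow> W \<subseteq> V \<Longrightarrow> sublinear_on r W"
  unfolding sublinear_on_def by blast

lemma dominated_extension_constant:
  assumes sl: "sublinear_on r (span (insert s S))" and lin: "real_linear_on \<rho> (span S)"
    and le: "\<forall>m\<in>span S. \<rho> m \<le> r m"
  obtains \<alpha> where "\<And>m. m \<in> span S \<Longrightarrow> \<rho> m - r (m - s) \<le> \<alpha>"
    and "\<And>m. m \<in> span S \<Longrightarrow> \<alpha> \<le> r (m + s) - \<rho> m"
proof -
  have sub: "span S \<subseteq> span (insert s S)" by (simp add: span_mono subset_insertI)
  have s: "s \<in> span (insert s S)" by (simp add: span_base)
  have key: "\<rho> m' - r (m' - s) \<le> r (m + s) - \<rho> m" if "m \<in> span S" "m' \<in> span S" for m m'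
  proof -
    have "\<rho> m' + \<rho> m = \<rho> (m' + m)" using lin that by (simp add: real_linear_on_def)
    also have "\<dots> \<le> r (m' + m)" using le that by (simp add: span_add)
    also have "m' + m = (m' - s) + (m + s)" by simp
    also have "r \<dots> \<le> r (m' - s) + r (m + s)"
      using sl sub s that unfolding sublinear_on_def by (meson span_add span_diff subsetD)
    finally show ?thesis by simp
  qed
  let ?A = "(\<lambda>m. \<rho> m - r (m - s)) ` span S"
  have "bdd_above ?A" unfolding bdd_above_def using key span_zero by blast
  moreover have "?A \<noteq> {}" using span_zero by blast
  ultimately show ?thesis
    using key by (intro that[of "Sup ?A"]) (auto intro!: cSup_upper cSup_least)
qed

lemma dominated_extension_value:
  assumes sl: "sublinear_on r (span (insert s S))" and lin: "real_linear_on \<rho> (span S)"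
    and le: "\<forall>m\<in>span S. \<rho> m \<le> r m"
    and lower: "\<And>m. m \<in> span S \<Longrightarrow> \<rho> m - r (m - s) \<le> \<alpha>"
    and upper: "\<And>m. m \<in> span S \<Longrightarrow> \<alpha> \<le> r (m + s) - \<rho> m"
    and m: "m \<in> span S"
  shows "\<rho> m + k * \<alpha> \<le> r (m + k *\<^sub>R s)"
proof -
  have w: "m + k *\<^sub>R s \<in> span (insert s S)"
    using m by (meson span_add span_base span_mono span_scale insertI1 subset_insertI subsetD)
  have m': "inverse \<bar>k\<bar> *\<^sub>R m \<in> span S" using m by (rule span_scale)
  have hom: "r (inverse \<bar>k\<bar> *\<^sub>R (m + k *\<^sub>R s)) = inverse \<bar>k\<bar> * r (m + k *\<^sub>R s)"
    using sl w unfolding sublinear_on_def by simp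
  have \<rho>m: "\<rho> (inverse \<bar>k\<bar> *\<^sub>R m) = inverse \<bar>k\<bar> * \<rho> m"
    using lin m unfolding real_linear_on_def by simp
  consider "k = 0" | "k > 0" | "k < 0" by linarith
  then show ?thesis
  proof cases
    case 1 then show ?thesis using le m by simp
  next
    case 2
    have "inverse \<bar>k\<bar> *\<^sub>R m + s = inverse \<bar>k\<bar> *\<^sub>R (m + k *\<^sub>R s)" using 2 by (simp add: algebra_simps)
    then have "\<alpha> \<le> inverse k * r (m + k *\<^sub>R s) - inverse k * \<rho> m"
      using upper[OF m'] hom \<rho>m 2 by simp
    then show ?thesis using 2 by (simp add: field_simps)
  next
    case 3
    have "inverse \<bar>k\<bar> *\<^sub>R m - s = inverse \<bar>k\<bar> *\<^sub>R (m + k *\<^sub>R s)" using 3 by (simp add: algebra_simps)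
    then have "- inverse k * \<rho> m + inverse k * r (m + k *\<^sub>R s) \<le> \<alpha>"
      using lower[OF m'] hom \<rho>m 3 by simp
    then show ?thesis using 3 by (simp add: field_simps)
  qed
qed

lemma span_insert_coeff_unique:
  assumes "s \<notin> span S" "w - k1 *\<^sub>R s \<in> span S" "w - k2 *\<^sub>R s \<in> span S"
  shows "k1 = k2"
proof (rule ccontr)
  assume ne: "k1 \<noteq> k2"
  have "(w - k2 *\<^sub>R s) - (w - k1 *\<^sub>R s) \<in> span S" using assms span_diff by blast
  then have "(k1 - k2) *\<^sub>R s \<in> span S" by (simp add: algebra_simps)
  then have "inverse (k1 - k2) *\<^sub>R ((k1 - k2) *\<^sub>R s) \<in> span S" by (rule span_scale)
  then show False using ne assms(1) by simp
qed

lemma hahn_banach_insert: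
  assumes sl: "sublinear_on r (span (insert s S))" and lin: "real_linear_on \<rho> (span S)"
    and le: "\<forall>m\<in>span S. \<rho> m \<le> r m" and ns: "s \<notin> span S"
  shows "\<exists>\<rho>'. real_linear_on \<rho>' (span (insert s S)) \<and> (\<forall>w\<in>span (insert s S). \<rho>' w \<le> r w)"
proof -
  obtain \<alpha> where lower: "\<And>m. m \<in> span S \<Longrightarrow> \<rho> m - r (m - s) \<le> \<alpha>"
    and upper: "\<And>m. m \<in> span S \<Longrightarrow> \<alpha> \<le> r (m + s) - \<rho> m"
    using dominated_extension_constant[OF sl lin le] by blast
  define coeff where "coeff w = (THE k. w - k *\<^sub>R s \<in> span S)" for w
  have coeff_eq: "coeff w = k" if "w - k *\<^sub>R s \<in> span S" for w k
    unfolding coeff_def using that span_insert_coeff_unique[OF ns] by blast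
  have coeff: "w - coeff w *\<^sub>R s \<in> span S" if "w \<in> span (insert s S)" for w
    using that coeff_eq by (auto simp: span_insert)
  define \<rho>' where "\<rho>' w = \<rho> (w - coeff w *\<^sub>R s) + coeff w * \<alpha>" for w
  have "real_linear_on \<rho>' (span (insert s S))"
    unfolding real_linear_on_def
  proof (intro conjI ballI allI)
    fix u v assume u: "u \<in> span (insert s S)" and v: "v \<in> span (insert s S)"
    have e: "(u + v) - (coeff u + coeff v) *\<^sub>R s = (u - coeff u *\<^sub>R s) + (v - coeff v *\<^sub>R s)"
      by (simp add: algebra_simps)
    have sum: "coeff (u + v) = coeff u + coeff v" using e coeff_eq coeff u v span_add by metis
    have "\<rho> ((u + v) - coeff (u + v) *\<^sub>R s) = \<rho> (u - coeff u *\<^sub>R s) + \<rho> (v - coeff v *\<^sub>R s)"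
      unfolding sum e using lin coeff u v unfolding real_linear_on_def by blast
    then show "\<rho>' (u + v) = \<rho>' u + \<rho>' v" unfolding \<rho>'_def sum by (simp add: algebra_simps)
  next
    fix c u assume u: "u \<in> span (insert s S)"
    have e: "c *\<^sub>R u - (c * coeff u) *\<^sub>R s = c *\<^sub>R (u - coeff u *\<^sub>R s)" by (simp add: algebra_simps)
    have prod: "coeff (c *\<^sub>R u) = c * coeff u" using e coeff_eq coeff u span_scale by metis
    have "\<rho> (c *\<^sub>R u - coeff (c *\<^sub>R u) *\<^sub>R s) = c * \<rho> (u - coeff u *\<^sub>R s)"
      unfolding prod e using lin coeff u unfolding real_linear_on_def by blast
    then show "\<rho>' (c *\<^sub>R u) = c * \<rho>' u" unfolding \<rho>'_def prod by (simp add: algebra_simps)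
  qed
  moreover have "\<rho>' w \<le> r w" if "w \<in> span (insert s S)" for w
    using dominated_extension_value[OF sl lin le lower upper coeff[OF that], of "coeff w"]
    unfolding \<rho>'_def by simp
  ultimately show ?thesis by blast
qed

lemma hahn_banach_finite_span:
  fixes S :: "'v::real_vector set"
  assumes "finite S" "sublinear_on r (span S)"
  shows "\<exists>\<rho>. real_linear_on \<rho> (span S) \<and> (\<forall>w\<in>span S. \<rho> w \<le> r w)"
  using assms
proof (induction S rule: finite_induct)
  case empty
  have "r 0 = 0" using empty.prems unfolding sublinear_on_def
    by (metis mult_zero_left order_refl scale_zero_left span_zero)
  then show ?case by (intro exI[of _ "\<lambda>_. 0"]) (simp add: real_linear_on_def)
next
  case (insert s S)
  have "sublinear_on r (span S)"
    using insert.prems by (rule sublinear_on_subset) (simp add: span_mono subset_insertI)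
  then obtain \<rho> where "real_linear_on \<rho> (span S)" "\<forall>w\<in>span S. \<rho> w \<le> r w"
    using insert.IH by blast
  then show ?case
    using hahn_banach_insert[OF insert.prems] span_redundant[of s S] by (cases "s \<in> span S") auto
qed

section \<open>Hahn--Banach for scalar functions on a finite set\<close>

text \<open>For \<open>\<complex>\<close> this is \<open>Re\<close>; for \<open>\<real>\<close> it is the identity.\<close>
definition re :: "'k::{real_normed_field,euclidean_space} \<Rightarrow> real" where
  "re t = t \<bullet> 1"

lemma re_of_real [simp]: "re (of_real r :: 'k::{real_normed_field,euclidean_space}) = r"
  unfolding re_def of_real_def by (simp add: dot_square_norm)

lemma re_zero [simp]: "re (0::'k::{real_normed_field,euclidean_space}) = 0"
  by (simp add: re_def)

lemma re_one [simp]: "re (1::'k::{real_normed_field,euclidean_space}) = 1"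
  using re_of_real[of 1, where 'k='k] by simp

lemma re_le_norm: "re (t::'k::{real_normed_field,euclidean_space}) \<le> norm t"
  unfolding re_def using norm_cauchy_schwarz[of t 1] by simp

lemma re_add: "re ((a::'k::{real_normed_field,euclidean_space}) + b) = re a + re b"
  unfolding re_def by (simp add: inner_add_left)

lemma re_scaleR: "re (c *\<^sub>R (a::'k::{real_normed_field,euclidean_space})) = c * re a"
  unfolding re_def by (simp add: inner_scaleR_left)

lemma re_minus: "re (- (a::'k::{real_normed_field,euclidean_space})) = - re a"
  unfolding re_def by simp

lemma re_diff: "re ((a::'k::{real_normed_field,euclidean_space}) - b) = re a - re b"
  unfolding re_def by (simp add: inner_diff_left)

lemma re_sum: "re (\<Sum>x\<in>X. a x :: 'k::{real_normed_field,euclidean_space}) = (\<Sum>x\<in>X. re (a x))"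
  unfolding re_def by (simp add: inner_sum_left)

lemma unimodular_mult_eq_norm:
  "\<exists>c::'k::{real_normed_field,euclidean_space}. norm c = 1 \<and> c * w = of_real (norm w)"
proof (cases "w = 0")
  case True then show ?thesis by (intro exI[of _ 1]) simp
next
  case False then show ?thesis by (intro exI[of _ "of_real (norm w) / w"]) (simp add: norm_divide)
qed

lemma eq_if_re_mult_eq:
  fixes a b :: "'k::{real_normed_field,euclidean_space}"
  assumes "\<And>t. re (t * a) = re (t * b)"
  shows "a = b"
proof (rule ccontr)
  assume "a \<noteq> b"
  then have "re (inverse (a - b) * a) - re (inverse (a - b) * b) = 1"
    by (simp add: re_diff[symmetric] right_diff_distrib[symmetric])
  then show False using assms by simp
qed

text \<open>The map \<open>w \<mapsto> re (\<cdot> * w)\<close> into the real dual is injective and real-linear between spaces of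
  equal finite dimension, hence onto.\<close>
lemma real_linear_functional_eq_re_mult:
  fixes \<psi> :: "'k::{real_normed_field,euclidean_space} \<Rightarrow> real"
  assumes lin: "linear \<psi>"
  shows "\<exists>w. \<forall>t. re (t * w) = \<psi> t"
proof -
  define \<Phi> where "\<Phi> w = (\<Sum>\<beta>\<in>Basis. re (\<beta> * w) *\<^sub>R \<beta>)" for w :: 'k
  have lin\<Phi>: "linear \<Phi>"
    unfolding \<Phi>_def
    by (rule linearI) (simp_all add: distrib_left re_add scaleR_add_left sum.distrib re_scaleR scaleR_sum_right)
  have coord: "\<Phi> w \<bullet> \<beta> = re (\<beta> * w)" if "\<beta> \<in> Basis" for w \<beta>
    unfolding \<Phi>_def using that by (simp add: inner_sum_left inner_Basis if_distrib cong: if_cong)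
  have expand: "re (t * w) = (\<Sum>\<beta>\<in>Basis. (t \<bullet> \<beta>) * re (\<beta> * w))" for t w :: 'k
    by (subst euclidean_representation[symmetric, of t])
       (simp add: sum_distrib_right re_sum re_scaleR)
  have "inj \<Phi>"
    unfolding linear_injective_0[OF lin\<Phi>]
  proof (intro allI impI)
    fix w assume "\<Phi> w = 0"
    then have "re (\<beta> * w) = 0" if "\<beta> \<in> Basis" for \<beta> using coord[OF that, of w] by simp
    then have "re (t * w) = 0" for t using expand[of t w] by simp
    then show "w = 0" using eq_if_re_mult_eq[of w 0] by simp
  qed
  then obtain w where w: "\<Phi> w = (\<Sum>\<beta>\<in>Basis. \<psi> \<beta> *\<^sub>R \<beta>)"
    using linear_injective_imp_surjective[OF lin\<Phi>] by (metis surjD)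
  have "re (\<beta> * w) = \<psi> \<beta>" if "\<beta> \<in> Basis" for \<beta>
    using coord[OF that, of w] that unfolding w by (simp add: inner_sum_left inner_Basis if_distrib cong: if_cong)
  then have "re (t * w) = \<psi> (\<Sum>\<beta>\<in>Basis. (t \<bullet> \<beta>) *\<^sub>R \<beta>)" for t
    using expand[of t w] by (simp add: linear_sum[OF lin] linear_scale[OF lin])
  then show ?thesis by (auto simp: euclidean_representation)
qed

instantiation "fun" :: (type, real_vector) real_vector
begin
definition scaleR_fun :: "real \<Rightarrow> ('a \<Rightarrow> 'b) \<Rightarrow> 'a \<Rightarrow> 'b" where
  "scaleR_fun r f = (\<lambda>x. r *\<^sub>R f x)"
instance by standard (simp_all add: scaleR_fun_def fun_eq_iff scaleR_add_right scaleR_add_left)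
end

lemma scaleR_fun_apply [simp]: "(r *\<^sub>R f) x = r *\<^sub>R f x"
  by (simp add: scaleR_fun_def)

definition max_norm :: "'x set \<Rightarrow> ('x \<Rightarrow> 'k::real_normed_vector) \<Rightarrow> real" where
  "max_norm X v = Max (insert 0 ((\<lambda>x. norm (v x)) ` X))"

lemma max_norm_ge: "finite X \<Longrightarrow> x \<in> X \<Longrightarrow> norm (v x) \<le> max_norm X v"
  unfolding max_norm_def by simp

lemma max_norm_nonneg: "finite X \<Longrightarrow> 0 \<le> max_norm X v"
  unfolding max_norm_def by simp

lemma max_norm_le: "finite X \<Longrightarrow> 0 \<le> M \<Longrightarrow> (\<And>x. x \<in> X \<Longrightarrow> norm (v x) \<le> M) \<Longrightarrow> max_norm X v \<le> M"
  unfolding max_norm_def by simp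

lemma max_norm_triangle: "finite X \<Longrightarrow> max_norm X (u + v) \<le> max_norm X u + max_norm X v"
  by (intro max_norm_le add_nonneg_nonneg max_norm_nonneg)
     (auto intro: norm_triangle_le add_mono max_norm_ge)

lemma max_norm_zero [simp]: "max_norm X 0 = 0"
  unfolding max_norm_def by (cases "X = {}") (simp_all add: image_constant_conv)

lemma max_norm_cong: "(\<And>x. x \<in> X \<Longrightarrow> u x = v x) \<Longrightarrow> max_norm X u = max_norm X v"
  unfolding max_norm_def by (metis (no_types, lifting) image_cong)

lemma max_norm_minus: "max_norm X (- v) = max_norm X v"
  unfolding max_norm_def by simp

lemma max_norm_mult:
  assumes "finite X"
  shows "max_norm X (\<lambda>x. c * v x) = norm (c::'k::real_normed_field) * max_norm X v"
proof -
  have "mono ((*) (norm c))" by (simp add: mono_def mult_left_mono)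
  then have "norm c * max_norm X v = Max ((*) (norm c) ` insert 0 ((\<lambda>x. norm (v x)) ` X))"
    unfolding max_norm_def using assms by (simp add: mono_Max_commute)
  then show ?thesis unfolding max_norm_def by (simp add: image_image norm_mult)
qed

lemma sum_fun_apply: "sum f A x = (\<Sum>a\<in>A. f a x)"
  by (induction A rule: infinite_finite_induct) auto

definition supported_on :: "'x set \<Rightarrow> ('x \<Rightarrow> 'k::zero) set" where
  "supported_on X = {v. \<forall>x. x \<notin> X \<longrightarrow> v x = 0}"

definition unit_fun :: "'x \<Rightarrow> 'k::zero \<Rightarrow> 'x \<Rightarrow> 'k" where
  "unit_fun x \<beta> = (\<lambda>x'. if x' = x then \<beta> else 0)"

lemma supported_on_sum_unit_fun:
  assumes "finite X" "v \<in> supported_on X"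
  shows "v = (\<Sum>x\<in>X. unit_fun x (v x))"
  using assms by (auto simp: fun_eq_iff sum_fun_apply unit_fun_def supported_on_def if_distrib cong: if_cong)

lemma subspace_supported_on: "subspace (supported_on X :: ('x \<Rightarrow> 'k::real_vector) set)"
  unfolding subspace_def supported_on_def by simp

lemma supported_on_eq_span:
  fixes X :: "'x set"
  assumes "finite X"
  shows "supported_on X = span ((\<lambda>(x, \<beta>). unit_fun x \<beta>) ` (X \<times> (Basis :: 'k::euclidean_space set)))"
    (is "_ = span ?S")
proof
  have "?S \<subseteq> supported_on X" by (auto simp: supported_on_def unit_fun_def)
  then show "span ?S \<subseteq> supported_on X" using span_minimal subspace_supported_on by blast
next
  show "supported_on X \<subseteq> span ?S"
  proof
    fix v :: "'x \<Rightarrow> 'k" assume v: "v \<in> supported_on X"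
    have "unit_fun x (v x) = (\<Sum>\<beta>\<in>Basis. (v x \<bullet> \<beta>) *\<^sub>R unit_fun x \<beta>)" for x
      by (auto simp: fun_eq_iff sum_fun_apply unit_fun_def euclidean_representation)
    then have "v = (\<Sum>x\<in>X. \<Sum>\<beta>\<in>Basis. (v x \<bullet> \<beta>) *\<^sub>R unit_fun x \<beta>)"
      using supported_on_sum_unit_fun[OF assms v] by simp
    also have "\<dots> \<in> span ?S" by (intro span_sum span_scale span_base) auto
    finally show "v \<in> span ?S" .
  qed
qed

lemma real_linear_on_eq_re_mult:
  fixes \<rho> :: "('x \<Rightarrow> 'k::{real_normed_field,euclidean_space}) \<Rightarrow> real"
  assumes mult: "\<And>t v. v \<in> W \<Longrightarrow> (\<lambda>x. t * v x) \<in> W"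
    and lin: "real_linear_on \<rho> W" and v: "v \<in> W"
  shows "\<exists>w. \<forall>t. re (t * w) = \<rho> (\<lambda>x. t * v x)"
proof (intro real_linear_functional_eq_re_mult linearI)
  fix t1 t2 :: 'k
  have "(\<lambda>x. (t1 + t2) * v x) = (\<lambda>x. t1 * v x) + (\<lambda>x. t2 * v x)"
    by (simp add: fun_eq_iff distrib_right)
  then show "\<rho> (\<lambda>x. (t1 + t2) * v x) = \<rho> (\<lambda>x. t1 * v x) + \<rho> (\<lambda>x. t2 * v x)"
    using lin mult[OF v] unfolding real_linear_on_def by simp
next
  fix c :: real and t :: 'k
  have "(\<lambda>x. (c *\<^sub>R t) * v x) = c *\<^sub>R (\<lambda>x. t * v x)" by (simp add: fun_eq_iff)
  then show "\<rho> (\<lambda>x. (c *\<^sub>R t) * v x) = c *\<^sub>R \<rho> (\<lambda>x. t * v x)"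
    using lin mult[OF v] unfolding real_linear_on_def by simp
qed

lemma complexify_real_linear_on:
  fixes \<rho> :: "('x \<Rightarrow> 'k::{real_normed_field,euclidean_space}) \<Rightarrow> real"
  assumes W: "subspace W" and mult: "\<And>t v. v \<in> W \<Longrightarrow> (\<lambda>x. t * v x) \<in> W"
    and lin: "real_linear_on \<rho> W"
  obtains z where "\<And>u v. u \<in> W \<Longrightarrow> v \<in> W \<Longrightarrow> z (u + v) = z u + z v"
    and "\<And>t v. v \<in> W \<Longrightarrow> z (\<lambda>x. t * v x) = t * z v"
    and "\<And>v. v \<in> W \<Longrightarrow> re (z v) = \<rho> v"
proof -
  have add: "\<rho> (u + v) = \<rho> u + \<rho> v" if "u \<in> W" "v \<in> W" for u v
    using lin that unfolding real_linear_on_def by blast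
  have "\<forall>v\<in>W. \<exists>w. \<forall>t. re (t * w) = \<rho> (\<lambda>x. t * v x)"
    using real_linear_on_eq_re_mult[OF mult lin] by blast
  from bchoice[OF this] obtain z where "\<forall>v\<in>W. \<forall>t. re (t * z v) = \<rho> (\<lambda>x. t * v x)" ..
  then have z: "\<And>t v. v \<in> W \<Longrightarrow> re (t * z v) = \<rho> (\<lambda>x. t * v x)" by blast
  show ?thesis
  proof
    fix u v assume u: "u \<in> W" and v: "v \<in> W"
    show "z (u + v) = z u + z v"
    proof (rule eq_if_re_mult_eq)
      fix t
      have "(\<lambda>x. t * (u + v) x) = (\<lambda>x. t * u x) + (\<lambda>x. t * v x)"
        by (simp add: fun_eq_iff distrib_left)
      then have "re (t * z (u + v)) = re (t * z u) + re (t * z v)"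
        using z[OF subspace_add[OF W u v]] z[OF u] z[OF v] add[OF mult[OF u] mult[OF v]] by simp
      then show "re (t * z (u + v)) = re (t * (z u + z v))" by (simp add: distrib_left re_add)
    qed
  next
    fix s v assume v: "v \<in> W"
    show "z (\<lambda>x. s * v x) = s * z v"
    proof (rule eq_if_re_mult_eq)
      fix t
      show "re (t * z (\<lambda>x. s * v x)) = re (t * (s * z v))"
        using z[OF mult[OF v], of t] z[OF v, of "t * s"] by (simp add: mult.assoc)
    qed
  next
    fix v assume "v \<in> W"
    then show "re (z v) = \<rho> v" using z[of v 1] by simp
  qed
qed

lemma linear_functional_supported_on_repr:
  fixes z :: "('x \<Rightarrow> 'k::{real_normed_field,euclidean_space}) \<Rightarrow> 'k"
  assumes X: "finite X"
    and add: "\<And>u v. u \<in> supported_on X \<Longrightarrow> v \<in> supported_on X \<Longrightarrow> z (u + v) = z u + z v"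
    and mult: "\<And>t v. v \<in> supported_on X \<Longrightarrow> z (\<lambda>x. t * v x) = t * z v"
    and v: "v \<in> supported_on X"
  shows "z v = (\<Sum>x\<in>X. v x * z (unit_fun x 1))"
proof -
  have unit: "unit_fun x t \<in> supported_on X" if "x \<in> X" for x and t :: 'k
    using that by (simp add: supported_on_def unit_fun_def)
  have "z (\<Sum>x\<in>F. unit_fun x (v x)) = (\<Sum>x\<in>F. v x * z (unit_fun x 1))" if "F \<subseteq> X" for F
    using finite_subset[OF that X] that
  proof (induction F rule: finite_induct)
    case empty
    have "z (\<lambda>x. 0 * (0::'x \<Rightarrow> 'k) x) = 0 * z 0" by (rule mult) (simp add: supported_on_def)
    then show ?case by (simp add: zero_fun_def)
  next
    case (insert x F)
    have x: "x \<in> X" using insert.prems by simp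
    have "(\<Sum>x\<in>F. unit_fun x (v x)) \<in> supported_on X"
      using insert.prems unit by (intro subspace_sum[OF subspace_supported_on]) auto
    then have "z (\<Sum>x\<in>insert x F. unit_fun x (v x)) = z (unit_fun x (v x)) + z (\<Sum>x\<in>F. unit_fun x (v x))"
      using insert.hyps add[OF unit[OF x]] by simp
    also have "unit_fun x (v x) = (\<lambda>x'. v x * unit_fun x 1 x')" by (simp add: unit_fun_def fun_eq_iff)
    also have "z \<dots> = v x * z (unit_fun x 1)" by (rule mult[OF unit[OF x]])
    finally show ?case using insert by simp
  qed
  from this[OF order_refl] show ?thesis using supported_on_sum_unit_fun[OF X v] by simp
qed

lemma hahn_banach_supported_on:
  fixes r :: "('x \<Rightarrow> 'k::{real_normed_field,euclidean_space}) \<Rightarrow> real"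
  assumes X: "finite X" and r: "sublinear_on r (supported_on X)"
  shows "\<exists>a. \<forall>v\<in>supported_on X. re (\<Sum>x\<in>X. v x * a x) \<le> r v"
proof -
  define S where "S = (\<lambda>(x, \<beta>). unit_fun x \<beta>) ` (X \<times> (Basis :: 'k set))"
  have span: "supported_on X = (span S :: ('x \<Rightarrow> 'k) set)" unfolding S_def by (rule supported_on_eq_span[OF X])
  have "finite S" unfolding S_def using X by simp
  then obtain \<rho> where lin: "real_linear_on \<rho> (supported_on X)" and \<rho>: "\<forall>v\<in>supported_on X. \<rho> v \<le> r v"
    using hahn_banach_finite_span[of S r] r unfolding span by blast
  have closed: "(\<lambda>x. t * v x) \<in> supported_on X" if "v \<in> supported_on X" for t and v :: "'x \<Rightarrow> 'k"
    using that by (simp add: supported_on_def)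
  obtain z where add: "\<And>u v. u \<in> supported_on X \<Longrightarrow> v \<in> supported_on X \<Longrightarrow> z (u + v) = z u + z v"
    and mult: "\<And>t v. v \<in> supported_on X \<Longrightarrow> z (\<lambda>x. t * v x) = t * z v"
    and re: "\<And>v. v \<in> supported_on X \<Longrightarrow> re (z v) = \<rho> v"
    using complexify_real_linear_on[OF subspace_supported_on closed lin] by blast
  show ?thesis
  proof (intro exI ballI)
    fix v :: "'x \<Rightarrow> 'k" assume v: "v \<in> supported_on X"
    have "z v = (\<Sum>x\<in>X. v x * z (unit_fun x 1))" by (rule linear_functional_supported_on_repr[OF X add mult v])
    then show "re (\<Sum>x\<in>X. v x * z (unit_fun x 1)) \<le> r v" using re[OF v] \<rho> v by simp
  qed
qed

section \<open>Approximating a dominated functional\<close>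

locale dominated_functional =
  fixes sm :: "'k::{real_normed_field,euclidean_space} \<Rightarrow> 'b::ab_group_add \<Rightarrow> 'b"
    and V :: "'b set" and y :: "'b \<Rightarrow> 'k" and L :: "'x \<Rightarrow> 'b \<Rightarrow> 'k" and N :: "'b \<Rightarrow> real"
    and X :: "'x set" and R \<epsilon> :: real
  assumes module: "module sm" and V: "lin_subspace sm V"
    and y: "lin_on sm (*) V y" and L: "\<And>x. lin_on sm (*) V (L x)"
    and N: "is_seminorm_on sm V N"
    and X: "finite X" and R: "0 \<le> R" and \<epsilon>: "0 \<le> \<epsilon>"
    and dominated: "\<And>b. b \<in> V \<Longrightarrow> norm (y b) \<le> R * max_norm X (\<lambda>x. L x b) + \<epsilon> * N b"
begin

definition eval_vector :: "'b \<Rightarrow> 'x \<Rightarrow> 'k" where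
  "eval_vector b = (\<lambda>x. if x \<in> X then L x b else 0)"

definition dominating_term :: "('x \<Rightarrow> 'k) \<Rightarrow> 'b \<Rightarrow> real" where
  "dominating_term v b = R * max_norm X (v - eval_vector b) + \<epsilon> * N b + re (y b)"

text \<open>An inf-convolution, finite by the domination hypothesis. A linear functional below it,
  written with coefficients \<open>a\<close>, satisfies \<open>\<Sum>|a x| \<le> R\<close> by the term with \<open>b = 0\<close>, and the
  approximation bound by the terms with \<open>v = eval_vector b\<close>.\<close>
definition dominating_functional :: "('x \<Rightarrow> 'k) \<Rightarrow> real" where
  "dominating_functional v = Inf (dominating_term v ` V)"

lemma eval_vector_add: "b1 \<in> V \<Longrightarrow> b2 \<in> V \<Longrightarrow> eval_vector (b1 + b2) = eval_vector b1 + eval_vector b2"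
  using L unfolding eval_vector_def lin_on_def by (simp add: fun_eq_iff)

lemma eval_vector_scale: "b \<in> V \<Longrightarrow> eval_vector (sm c b) = (\<lambda>x. c * eval_vector b x)"
  using L unfolding eval_vector_def lin_on_def by (simp add: fun_eq_iff)

lemma eval_vector_supported_on: "eval_vector b \<in> supported_on X"
  unfolding eval_vector_def supported_on_def by simp

lemma zero_in_V: "0 \<in> V"
  using V by (simp add: lin_subspace_def)

lemma dominating_term_at_zero: "dominating_term v 0 = R * max_norm X v"
proof -
  have "eval_vector 0 = 0" using lin_on_zero[OF module V L] by (simp add: eval_vector_def fun_eq_iff)
  then show ?thesis
    unfolding dominating_term_def using lin_on_zero[OF module V y] seminorm_zero[OF module V N] by simp
qed

lemma dominating_term_lower_bound:
  assumes b: "b \<in> V" shows "- R * max_norm X v \<le> dominating_term v b"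
proof -
  have "max_norm X (eval_vector b) = max_norm X (\<lambda>x. L x b)"
    by (rule max_norm_cong) (simp add: eval_vector_def)
  then have tri: "max_norm X (\<lambda>x. L x b) \<le> max_norm X (v - eval_vector b) + max_norm X v"
    using max_norm_triangle[OF X, of "eval_vector b - v" v] max_norm_minus[of X "v - eval_vector b"] by simp
  have "R * max_norm X (\<lambda>x. L x b) \<le> R * max_norm X (v - eval_vector b) + R * max_norm X v"
    using mult_left_mono[OF tri R] by (simp add: distrib_left)
  moreover have "- re (y b) \<le> norm (y b)" using re_le_norm[of "- y b"] by (simp add: re_minus)
  ultimately show ?thesis
    using dominated[OF b] unfolding dominating_term_def by linarith
qed

lemma dominating_functional_le: "b \<in> V \<Longrightarrow> dominating_functional v \<le> dominating_term v b"
  unfolding dominating_functional_def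
  by (rule cInf_lower) (auto simp: bdd_below_def intro: dominating_term_lower_bound)

lemma dominating_functional_greatest:
  "(\<And>b. b \<in> V \<Longrightarrow> m \<le> dominating_term v b) \<Longrightarrow> m \<le> dominating_functional v"
  unfolding dominating_functional_def using zero_in_V by (intro cInf_greatest) auto

lemma dominating_functional_add:
  "dominating_functional (u + v) \<le> dominating_functional u + dominating_functional v"
proof -
  have "dominating_functional (u + v) - dominating_term v b2 \<le> dominating_functional u"
    if b2: "b2 \<in> V" for b2
  proof (rule dominating_functional_greatest)
    fix b1 assume b1: "b1 \<in> V"
    have "u + v - eval_vector (b1 + b2) = (u - eval_vector b1) + (v - eval_vector b2)"
      using eval_vector_add[OF b1 b2] by (simp add: algebra_simps)
    then have tri: "max_norm X (u + v - eval_vector (b1 + b2))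
        \<le> max_norm X (u - eval_vector b1) + max_norm X (v - eval_vector b2)"
      using max_norm_triangle[OF X, of "u - eval_vector b1" "v - eval_vector b2"] by (simp only:)
    have "R * max_norm X (u + v - eval_vector (b1 + b2))
        \<le> R * max_norm X (u - eval_vector b1) + R * max_norm X (v - eval_vector b2)"
      using mult_left_mono[OF tri R] by (simp add: distrib_left)
    moreover have "N (b1 + b2) \<le> N b1 + N b2" using N b1 b2 unfolding is_seminorm_on_def by blast
    then have "\<epsilon> * N (b1 + b2) \<le> \<epsilon> * N b1 + \<epsilon> * N b2"
      by (metis distrib_left mult_left_mono \<epsilon>)
    moreover have "re (y (b1 + b2)) = re (y b1) + re (y b2)"
      using y b1 b2 unfolding lin_on_def by (simp add: re_add)
    moreover have "b1 + b2 \<in> V" using V b1 b2 by (simp add: lin_subspace_def)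
    ultimately have "dominating_term (u + v) (b1 + b2) \<le> dominating_term u b1 + dominating_term v b2"
      unfolding dominating_term_def by linarith
    then show "dominating_functional (u + v) - dominating_term v b2 \<le> dominating_term u b1"
      using dominating_functional_le[OF \<open>b1 + b2 \<in> V\<close>, of "u + v"] by simp
  qed
  then have "dominating_functional (u + v) - dominating_functional u \<le> dominating_functional v"
    by (intro dominating_functional_greatest) (simp add: algebra_simps)
  then show ?thesis by simp
qed

lemma dominating_term_scale:
  assumes c: "0 < c" and b: "b \<in> V"
  shows "dominating_term (c *\<^sub>R v) (sm (of_real c) b) = c * dominating_term v b"
proof -
  have "c *\<^sub>R v - eval_vector (sm (of_real c) b) = (\<lambda>x. of_real c * (v - eval_vector b) x)"
    using eval_vector_scale[OF b] by (simp add: fun_eq_iff algebra_simps scaleR_conv_of_real)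
  then have "max_norm X (c *\<^sub>R v - eval_vector (sm (of_real c) b)) = c * max_norm X (v - eval_vector b)"
    using max_norm_mult[OF X, of "of_real c" "v - eval_vector b"] c by simp
  moreover have "N (sm (of_real c) b) = c * N b" and "y (sm (of_real c) b) = of_real c * y b"
    using N y b c unfolding is_seminorm_on_def lin_on_def by auto
  ultimately show ?thesis
    unfolding dominating_term_def by (simp add: re_scaleR[symmetric] scaleR_conv_of_real algebra_simps)
qed

lemma dominating_functional_scale_le:
  assumes c: "0 < c" shows "dominating_functional (c *\<^sub>R v) \<le> c * dominating_functional v"
proof -
  have "dominating_functional (c *\<^sub>R v) / c \<le> dominating_functional v"
  proof (rule dominating_functional_greatest)
    fix b assume b: "b \<in> V"
    have "sm (of_real c) b \<in> V" using V b by (simp add: lin_subspace_def)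
    then have "dominating_functional (c *\<^sub>R v) \<le> c * dominating_term v b"
      using dominating_functional_le[of "sm (of_real c) b" "c *\<^sub>R v"] dominating_term_scale[OF c b] by simp
    then show "dominating_functional (c *\<^sub>R v) / c \<le> dominating_term v b" using c by (simp add: field_simps)
  qed
  then show ?thesis using c by (simp add: field_simps)
qed

lemma sublinear_dominating_functional: "sublinear_on dominating_functional UNIV"
  unfolding sublinear_on_def
proof (intro conjI ballI allI impI)
  fix c :: real and v :: "'x \<Rightarrow> 'k" assume "0 \<le> c"
  then consider "c = 0" | "0 < c" by linarith
  then show "dominating_functional (c *\<^sub>R v) = c * dominating_functional v"
  proof cases
    case 1
    have "dominating_functional 0 \<le> 0" using dominating_functional_le[OF zero_in_V, of 0] dominating_term_at_zero by simp
    moreover have "0 \<le> dominating_functional 0"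
      by (rule dominating_functional_greatest) (use dominating_term_lower_bound[of _ 0] in simp)
    ultimately show ?thesis using 1 by simp
  next
    case 2
    have "dominating_functional v = dominating_functional (inverse c *\<^sub>R (c *\<^sub>R v))" using 2 by simp
    also have "\<dots> \<le> inverse c * dominating_functional (c *\<^sub>R v)"
      using 2 by (intro dominating_functional_scale_le) simp
    finally show ?thesis using dominating_functional_scale_le[OF 2, of v] 2 by (simp add: field_simps)
  qed
qed (rule dominating_functional_add)

lemma approximating_coefficients:
  "\<exists>a. (\<Sum>x\<in>X. norm (a x)) \<le> R \<and> (\<forall>b\<in>V. norm (y b - (\<Sum>x\<in>X. a x * L x b)) \<le> \<epsilon> * N b)"
proof -
  obtain a where a: "\<And>v. v \<in> supported_on X \<Longrightarrow> re (\<Sum>x\<in>X. v x * a x) \<le> dominating_functional v"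
    using hahn_banach_supported_on[OF X sublinear_on_subset[OF sublinear_dominating_functional]] by blast
  have "(\<Sum>x\<in>X. norm (a x)) \<le> R"
  proof -
    have "\<forall>x. \<exists>c. norm c = 1 \<and> c * a x = of_real (norm (a x))"
      using unimodular_mult_eq_norm by blast
    from choice[OF this] obtain u where u: "\<And>x. norm (u x) = 1" "\<And>x. u x * a x = of_real (norm (a x))"
      by blast
    define v where "v x = (if x \<in> X then u x else 0)" for x
    have "v \<in> supported_on X" by (simp add: v_def supported_on_def)
    then have "re (\<Sum>x\<in>X. v x * a x) \<le> dominating_term v 0"
      using a dominating_functional_le[OF zero_in_V] by (meson order_trans)
    also have "dominating_term v 0 = R * max_norm X v" by (rule dominating_term_at_zero)
    also have "\<dots> \<le> R" using R u(1) by (intro mult_left_le max_norm_le[OF X]) (auto simp: v_def)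
    finally show ?thesis using u(2) by (simp add: v_def re_sum)
  qed
  moreover have "norm (y b - (\<Sum>x\<in>X. a x * L x b)) \<le> \<epsilon> * N b" if b: "b \<in> V" for b
  proof -
    obtain c where c: "norm c = 1" "c * (y b - (\<Sum>x\<in>X. a x * L x b)) = of_real (norm (y b - (\<Sum>x\<in>X. a x * L x b)))"
      using unimodular_mult_eq_norm by blast
    have b': "sm (- c) b \<in> V" using V b by (simp add: lin_subspace_def)
    have "re (\<Sum>x\<in>X. eval_vector (sm (- c) b) x * a x) \<le> dominating_term (eval_vector (sm (- c) b)) (sm (- c) b)"
      using a[OF eval_vector_supported_on] dominating_functional_le[OF b'] by (meson order_trans)
    moreover have "(\<Sum>x\<in>X. eval_vector (sm (- c) b) x * a x) = - c * (\<Sum>x\<in>X. a x * L x b)"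
      using eval_vector_scale[OF b] by (simp add: eval_vector_def sum_distrib_left algebra_simps)
    moreover have "N (sm (- c) b) = N b" and "y (sm (- c) b) = - c * y b"
      using N y b c unfolding is_seminorm_on_def lin_on_def by auto
    ultimately have "re (c * y b) - re (c * (\<Sum>x\<in>X. a x * L x b)) \<le> \<epsilon> * N b"
      unfolding dominating_term_def by (simp add: re_minus)
    moreover have "norm (y b - (\<Sum>x\<in>X. a x * L x b)) = re (c * y b) - re (c * (\<Sum>x\<in>X. a x * L x b))"
      unfolding re_diff[symmetric] right_diff_distrib[symmetric] c(2) by simp
    ultimately show ?thesis by simp
  qed
  ultimately show ?thesis by blast
qed

end

section \<open>Seminormed spaces\<close>

locale seminormed_space =
  fixes sc :: "'k::real_normed_field \<Rightarrow> 'v::ab_group_add \<Rightarrow> 'v"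
    and V :: "'v set" and q :: "'i \<Rightarrow> 'v \<Rightarrow> real"
  assumes module: "module sc" and lcHs: "lcHs sc V q"
begin

lemma subspace: "lin_subspace sc V"
  using lcHs by (simp add: lcHs_def)

lemma seminorm: "is_seminorm_on sc V (q i)"
  using lcHs by (simp add: lcHs_def)

lemma q_nonneg: "x \<in> V \<Longrightarrow> 0 \<le> q i x"
  by (rule seminorm_nonneg[OF module subspace seminorm])

lemma sum_q_mono: "finite J' \<Longrightarrow> J \<subseteq> J' \<Longrightarrow> x \<in> V \<Longrightarrow> (\<Sum>i\<in>J. q i x) \<le> (\<Sum>i\<in>J'. q i x)"
  by (rule sum_mono2) (auto simp: q_nonneg)

definition seminorm_lipschitz :: "('v \<Rightarrow> real) \<Rightarrow> bool" where
  "seminorm_lipschitz h \<longleftrightarrow>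
     (\<exists>J C. finite J \<and> 0 \<le> C \<and> (\<forall>f\<in>V. \<forall>g\<in>V. \<bar>h f - h g\<bar> \<le> C * (\<Sum>i\<in>J. q i (f - g))))"

lemma sn_open_sublevel:
  assumes "seminorm_lipschitz h" shows "sn_open V q {f\<in>V. h f < k}"
proof -
  obtain J C where J: "finite J" "0 \<le> C" and lip: "\<And>f g. f \<in> V \<Longrightarrow> g \<in> V \<Longrightarrow> \<bar>h f - h g\<bar> \<le> C * (\<Sum>i\<in>J. q i (f - g))"
    using assms unfolding seminorm_lipschitz_def by blast
  have "{g \<in> V. (\<Sum>i\<in>J. q i (g - f)) < (k - h f) / (C + 1)} \<subseteq> {f \<in> V. h f < k}"
    if f: "f \<in> V" "h f < k" for f
  proof
    fix g assume "g \<in> {g \<in> V. (\<Sum>i\<in>J. q i (g - f)) < (k - h f) / (C + 1)}"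
    then have g: "g \<in> V" and close: "(\<Sum>i\<in>J. q i (g - f)) < (k - h f) / (C + 1)" by auto
    have "h g - h f \<le> C * (\<Sum>i\<in>J. q i (g - f))" using lip[OF g f(1)] by simp
    also have "\<dots> \<le> C * ((k - h f) / (C + 1))" using mult_left_mono[OF less_imp_le[OF close] J(2)] .
    also have "\<dots> < k - h f" using f(2) J(2) by (simp add: field_simps)
    finally show "g \<in> {f \<in> V. h f < k}" using g by simp
  qed
  moreover have "(k - h f) / (C + 1) > 0" if "h f < k" for f using that J(2) by simp
  ultimately show ?thesis unfolding sn_open_def using J(1) by blast
qed

lemma seminorm_lipschitz_add:
  assumes "seminorm_lipschitz h1" "seminorm_lipschitz h2"
  shows "seminorm_lipschitz (\<lambda>f. h1 f + h2 f)"
proof -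
  obtain J1 C1 where 1: "finite J1" "0 \<le> C1" "\<forall>f\<in>V. \<forall>g\<in>V. \<bar>h1 f - h1 g\<bar> \<le> C1 * (\<Sum>i\<in>J1. q i (f - g))"
    using assms(1) unfolding seminorm_lipschitz_def by blast
  obtain J2 C2 where 2: "finite J2" "0 \<le> C2" "\<forall>f\<in>V. \<forall>g\<in>V. \<bar>h2 f - h2 g\<bar> \<le> C2 * (\<Sum>i\<in>J2. q i (f - g))"
    using assms(2) unfolding seminorm_lipschitz_def by blast
  have "\<bar>(h1 f + h2 f) - (h1 g + h2 g)\<bar> \<le> (C1 + C2) * (\<Sum>i\<in>J1 \<union> J2. q i (f - g))"
    if f: "f \<in> V" and g: "g \<in> V" for f g
  proof -
    have d: "f - g \<in> V" by (rule lin_subspace_diff[OF module subspace f g])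
    have "C1 * (\<Sum>i\<in>J1. q i (f - g)) \<le> C1 * (\<Sum>i\<in>J1 \<union> J2. q i (f - g))"
      and "C2 * (\<Sum>i\<in>J2. q i (f - g)) \<le> C2 * (\<Sum>i\<in>J1 \<union> J2. q i (f - g))"
      using 1 2 sum_q_mono[OF _ _ d] by (simp_all add: mult_left_mono)
    moreover have "\<bar>(h1 f + h2 f) - (h1 g + h2 g)\<bar> \<le> \<bar>h1 f - h1 g\<bar> + \<bar>h2 f - h2 g\<bar>" by simp
    moreover have "\<bar>h1 f - h1 g\<bar> \<le> C1 * (\<Sum>i\<in>J1. q i (f - g))" "\<bar>h2 f - h2 g\<bar> \<le> C2 * (\<Sum>i\<in>J2. q i (f - g))"
      using 1(3) 2(3) f g by blast+
    ultimately show ?thesis by (simp add: distrib_right)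
  qed
  then show ?thesis unfolding seminorm_lipschitz_def using 1 2 by (intro exI[of _ "J1 \<union> J2"] exI[of _ "C1 + C2"]) auto
qed

lemma seminorm_lipschitz_scale:
  assumes "seminorm_lipschitz h" shows "seminorm_lipschitz (\<lambda>f. c * h f)"
proof -
  obtain J C where J: "finite J" "0 \<le> C" "\<forall>f\<in>V. \<forall>g\<in>V. \<bar>h f - h g\<bar> \<le> C * (\<Sum>i\<in>J. q i (f - g))"
    using assms unfolding seminorm_lipschitz_def by blast
  have "\<bar>c * h f - c * h g\<bar> \<le> (\<bar>c\<bar> * C) * (\<Sum>i\<in>J. q i (f - g))" if "f \<in> V" "g \<in> V" for f g
  proof -
    have "\<bar>c * h f - c * h g\<bar> = \<bar>c\<bar> * \<bar>h f - h g\<bar>" by (simp add: abs_mult[symmetric] right_diff_distrib)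
    also have "\<dots> \<le> \<bar>c\<bar> * (C * (\<Sum>i\<in>J. q i (f - g)))" using J(3) that by (intro mult_left_mono) auto
    finally show ?thesis by (simp add: mult.assoc)
  qed
  then show ?thesis unfolding seminorm_lipschitz_def using J by (intro exI[of _ J] exI[of _ "\<bar>c\<bar> * C"]) auto
qed

lemma sn_dual_bound:
  assumes "y \<in> sn_dual sc V q"
  obtains J C where "finite J" "0 \<le> C" "\<And>f. f \<in> V \<Longrightarrow> norm (y f) \<le> C * (\<Sum>i\<in>J. q i f)"
proof -
  obtain J C where "finite J" and bound: "\<And>f. f \<in> V \<Longrightarrow> norm (y f) \<le> C * (\<Sum>i\<in>J. q i f)"
    using assms unfolding sn_dual_def sn_cont_def by blast
  moreover have "C * (\<Sum>i\<in>J. q i f) \<le> \<bar>C\<bar> * (\<Sum>i\<in>J. q i f)" if "f \<in> V" for f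
    using that by (intro mult_right_mono) (simp_all add: sum_nonneg q_nonneg)
  ultimately show ?thesis by (intro that[of J "\<bar>C\<bar>"]) (auto intro: order_trans)
qed

lemma seminorm_lipschitz_dual_norm:
  assumes y: "y \<in> sn_dual sc V q" shows "seminorm_lipschitz (\<lambda>f. norm (y f))"
proof -
  obtain J C where J: "finite J" "0 \<le> C" "\<And>f. f \<in> V \<Longrightarrow> norm (y f) \<le> C * (\<Sum>i\<in>J. q i f)"
    using sn_dual_bound[OF y] by blast
  have lin: "lin_on sc (*) V y" using y by (simp add: sn_dual_def)
  have "\<bar>norm (y f) - norm (y g)\<bar> \<le> C * (\<Sum>i\<in>J. q i (f - g))" if "f \<in> V" "g \<in> V" for f g
    using norm_triangle_ineq3[of "y f" "y g"] lin_on_diff[OF module subspace lin that]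
      J(3)[OF lin_subspace_diff[OF module subspace that]] by simp
  then show ?thesis unfolding seminorm_lipschitz_def using J by blast
qed

lemma sn_compact_finite_subcover:
  assumes K: "sn_compact V q K" and op: "\<And>i. i \<in> I \<Longrightarrow> sn_open V q (Op i)" and cov: "K \<subseteq> (\<Union>i\<in>I. Op i)"
  obtains I' where "I' \<subseteq> I" "finite I'" "K \<subseteq> (\<Union>i\<in>I'. Op i)"
proof -
  have cover: "\<And>\<U>. \<forall>W\<in>\<U>. sn_open V q W \<Longrightarrow> K \<subseteq> \<Union>\<U> \<Longrightarrow> \<exists>\<V>\<subseteq>\<U>. finite \<V> \<and> K \<subseteq> \<Union>\<V>"
    using K unfolding sn_compact_def by simp
  have "\<forall>W\<in>Op ` I. sn_open V q W" using op by blast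
  then obtain \<V> where "\<V> \<subseteq> Op ` I" "finite \<V>" "K \<subseteq> \<Union>\<V>"
    using cover[of "Op ` I"] cov by blast
  moreover from this obtain I' where "I' \<subseteq> I" "finite I'" "\<V> = Op ` I'"
    by (meson finite_subset_image)
  ultimately show ?thesis using that by blast
qed

lemma sn_compact_bdd_above:
  assumes K: "sn_compact V q K" and h: "seminorm_lipschitz h"
  shows "bdd_above (h ` K)"
proof -
  have "K \<subseteq> V" using K by (simp add: sn_compact_def)
  have cov: "K \<subseteq> (\<Union>n\<in>UNIV. {f\<in>V. h f < real n})"
  proof
    fix f assume "f \<in> K"
    moreover obtain n :: nat where "h f < real n" using reals_Archimedean2 by blast
    ultimately show "f \<in> (\<Union>n\<in>UNIV. {f\<in>V. h f < real n})" using \<open>K \<subseteq> V\<close> by blast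
  qed
  have op: "sn_open V q {f\<in>V. h f < real n}" for n :: nat by (rule sn_open_sublevel[OF h])
  obtain I where I: "finite I" "K \<subseteq> (\<Union>n\<in>I. {f\<in>V. h f < real n})"
    by (rule sn_compact_finite_subcover[OF K op cov])
  have "h f \<le> real (Max (insert 0 I))" if f: "f \<in> K" for f
  proof -
    obtain n where "n \<in> I" "h f < real n" using I f by blast
    moreover have "n \<le> Max (insert 0 I)" using I(1) \<open>n \<in> I\<close> by simp
    ultimately show ?thesis by linarith
  qed
  then show ?thesis unfolding bdd_above_def by blast
qed

lemma sn_dual_add:
  assumes y1: "y1 \<in> sn_dual sc V q" and y2: "y2 \<in> sn_dual sc V q"
  shows "(\<lambda>f. y1 f + y2 f) \<in> sn_dual sc V q"
proof -
  obtain J1 C1 where 1: "finite J1" "0 \<le> C1" "\<And>f. f \<in> V \<Longrightarrow> norm (y1 f) \<le> C1 * (\<Sum>i\<in>J1. q i f)"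
    using sn_dual_bound[OF y1] by blast
  obtain J2 C2 where 2: "finite J2" "0 \<le> C2" "\<And>f. f \<in> V \<Longrightarrow> norm (y2 f) \<le> C2 * (\<Sum>i\<in>J2. q i f)"
    using sn_dual_bound[OF y2] by blast
  have "norm (y1 f + y2 f) \<le> (C1 + C2) * (\<Sum>i\<in>J1 \<union> J2. q i f)" if f: "f \<in> V" for f
  proof -
    have "C1 * (\<Sum>i\<in>J1. q i f) \<le> C1 * (\<Sum>i\<in>J1 \<union> J2. q i f)"
      and "C2 * (\<Sum>i\<in>J2. q i f) \<le> C2 * (\<Sum>i\<in>J1 \<union> J2. q i f)"
      using 1 2 sum_q_mono[OF _ _ f] by (simp_all add: mult_left_mono)
    then show ?thesis
      using norm_triangle_ineq[of "y1 f" "y2 f"] 1(3)[OF f] 2(3)[OF f] by (simp add: distrib_right)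
  qed
  moreover have "lin_on sc (*) V (\<lambda>f. y1 f + y2 f)"
    using y1 y2 unfolding sn_dual_def lin_on_def by (simp add: distrib_left)
  ultimately show ?thesis using 1 2 y1 y2 unfolding sn_dual_def sn_cont_def by auto
qed

lemma sn_dual_scale:
  assumes y: "y \<in> sn_dual sc V q" shows "(\<lambda>f. c * y f) \<in> sn_dual sc V q"
proof -
  obtain J C where J: "finite J" "0 \<le> C" "\<And>f. f \<in> V \<Longrightarrow> norm (y f) \<le> C * (\<Sum>i\<in>J. q i f)"
    using sn_dual_bound[OF y] by blast
  then have "norm (c * y f) \<le> (norm c * C) * (\<Sum>i\<in>J. q i f)" if "f \<in> V" for f
    using that by (simp add: norm_mult mult.assoc mult_left_mono)
  moreover have "lin_on sc (*) V (\<lambda>f. c * y f)"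
    using y unfolding sn_dual_def lin_on_def by (simp add: distrib_left mult.left_commute)
  ultimately show ?thesis using J y unfolding sn_dual_def sn_cont_def by auto
qed

lemma sn_dual_zero: "(\<lambda>f. 0) \<in> sn_dual sc V q"
  unfolding sn_dual_def sn_cont_def lin_on_def by (auto intro: exI[of _ "{}"])

lemma sn_dual_sum: "finite A \<Longrightarrow> (\<And>a. a \<in> A \<Longrightarrow> y a \<in> sn_dual sc V q) \<Longrightarrow> (\<lambda>f. \<Sum>a\<in>A. y a f) \<in> sn_dual sc V q"
  by (induction A rule: finite_induct) (simp_all add: sn_dual_zero sn_dual_add)

definition disc :: "('i \<Rightarrow> real) \<Rightarrow> 'v set" where
  "disc M = {v\<in>V. \<forall>i. q i v \<le> M i}"

lemma zero_in_disc: "(\<And>i. 0 \<le> M i) \<Longrightarrow> 0 \<in> disc M"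
  unfolding disc_def using subspace seminorm_zero[OF module subspace seminorm]
  by (simp add: lin_subspace_def)

lemma disc_bounded: "sn_bounded V q (disc M)"
  unfolding sn_bounded_def disc_def by blast

lemma disc_closed: "sn_closed V q (disc M)"
  unfolding sn_closed_def sn_open_def
proof (intro conjI ballI)
  fix v assume v: "v \<in> V - disc M"
  then have "\<not> (\<forall>i. q i v \<le> M i)" unfolding disc_def by blast
  then obtain i where i: "M i < q i v" by (auto simp: not_le)
  have "{w\<in>V. (\<Sum>i\<in>{i}. q i (w - v)) < q i v - M i} \<subseteq> V - disc M"
  proof
    fix w assume "w \<in> {w\<in>V. (\<Sum>i\<in>{i}. q i (w - v)) < q i v - M i}"
    then have w: "w \<in> V" and close: "q i (w - v) < q i v - M i" by auto
    have "v - w \<in> V" using lin_subspace_diff[OF module subspace] v w by blast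
    then have "q i (w + (v - w)) \<le> q i w + q i (v - w)"
      using seminorm[of i] w unfolding is_seminorm_on_def by blast
    then have "q i v \<le> q i w + q i (v - w)" by simp
    moreover have "q i (v - w) = q i (w - v)"
      using seminorm_diff_commute[OF module subspace seminorm, of v w] v w by blast
    ultimately have "M i < q i w" using close by linarith
    then show "w \<in> V - disc M" using w unfolding disc_def by (auto simp: not_le)
  qed
  then show "\<exists>J \<epsilon>. finite J \<and> 0 < \<epsilon> \<and> {w\<in>V. (\<Sum>i\<in>J. q i (w - v)) < \<epsilon>} \<subseteq> V - disc M"
    using i by (intro exI[of _ "{i}"] exI[of _ "q i v - M i"]) simp
qed (auto simp: disc_def)

lemma disc_abs_convex:
  assumes M: "\<And>i. 0 \<le> M i" shows "abs_convex sc (disc M)"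
  unfolding abs_convex_def
proof (intro ballI allI impI)
  fix x y and a b :: 'k assume x: "x \<in> disc M" and y: "y \<in> disc M" and ab: "norm a + norm b \<le> 1"
  have xy: "x \<in> V" "y \<in> V" "sc a x \<in> V" "sc b y \<in> V" using x y subspace by (auto simp: disc_def lin_subspace_def)
  have "q i (sc a x + sc b y) \<le> (norm a + norm b) * M i" for i
  proof -
    have "q i (sc a x + sc b y) \<le> q i (sc a x) + q i (sc b y)"
      using seminorm[of i] xy unfolding is_seminorm_on_def by blast
    also have "\<dots> = norm a * q i x + norm b * q i y"
      using seminorm[of i] xy unfolding is_seminorm_on_def by simp
    also have "\<dots> \<le> norm a * M i + norm b * M i"
      using x y unfolding disc_def by (intro add_mono mult_left_mono) auto
    finally show ?thesis by (simp add: distrib_right)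
  qed
  moreover have "(norm a + norm b) * M i \<le> M i" for i using ab M[of i] by (simp add: mult_left_le_one_le)
  ultimately show "sc a x + sc b y \<in> disc M"
    using xy subspace unfolding disc_def lin_subspace_def by (blast intro: order_trans)
qed

end

section \<open>Gauges and geometric series in Banach discs\<close>

lemma gauge_fn_bound:
  fixes sc :: "'k::real_normed_field \<Rightarrow> 'v::ab_group_add \<Rightarrow> 'v"
  assumes module: "module sc" and D0: "0 \<in> D" and v: "v \<in> (\<Union>n::nat. sc (of_nat n) ` D)"
    and K: "0 \<le> K" and hom: "\<And>t w. 0 < t \<Longrightarrow> \<phi> (sc (of_real t) w) = t * \<phi> w"
    and bound: "\<And>d. d \<in> D \<Longrightarrow> \<phi> d \<le> K"
  shows "\<phi> v \<le> K * gauge_fn sc D v"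
proof -
  let ?T = "{t::real. 0 < t \<and> v \<in> sc (of_real t) ` D}"
  have le: "\<phi> v \<le> K * t" if t: "t \<in> ?T" for t
  proof -
    obtain d where "0 < t" "d \<in> D" "v = sc (of_real t) d" using t by blast
    then have "\<phi> v = t * \<phi> d" using hom by simp
    also have "\<dots> \<le> t * K" using bound[OF \<open>d \<in> D\<close>] \<open>0 < t\<close> by (simp add: mult_left_mono)
    finally show ?thesis by (simp add: mult.commute)
  qed
  obtain n d where d: "d \<in> D" and vd: "v = sc (of_nat n) d" using v by blast
  have "?T \<noteq> {}"
  proof (cases "n = 0")
    case True
    then have "v = sc (of_real 1) 0" using vd module.scale_zero_left[OF module] module.scale_zero_right[OF module] by simp
    then have "v \<in> sc (of_real 1) ` D" using D0 by blast
    then have "1 \<in> ?T" by simp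
    then show ?thesis by blast
  next
    case False
    moreover have "v \<in> sc (of_real (real n)) ` D" using vd d by simp
    ultimately have "real n \<in> ?T" by simp
    then show ?thesis by blast
  qed
  then obtain t where t: "t \<in> ?T" by blast
  show ?thesis
  proof (cases "K = 0")
    case True then show ?thesis using le[OF t] by simp
  next
    case False
    then have "\<phi> v / K \<le> Inf ?T" using K le by (intro cInf_greatest[OF \<open>?T \<noteq> {}\<close>]) (simp add: field_simps)
    then show ?thesis using K False unfolding gauge_fn_def by (simp add: field_simps)
  qed
qed

lemma gauge_fn_le_one:
  assumes "module sc" "d \<in> D" shows "gauge_fn sc D d \<le> 1"
  unfolding gauge_fn_def
proof (rule cInf_lower)
  have "d \<in> sc 1 ` D" using assms(2) module.scale_one[OF assms(1), of d] by (metis image_eqI)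
  then show "1 \<in> {t::real. 0 < t \<and> d \<in> sc (of_real t) ` D}" by simp
qed (auto simp: bdd_below_def intro: exI[of _ 0])

lemma sum_half_powers_le: "(\<Sum>k\<in>{n..<m}. (1/2::real)^k) \<le> 2 * (1/2)^n"
proof -
  have "(\<Sum>k\<in>{n..<m}. (1/2::real)^k) = 2 * (1/2)^n - 2 * (1/2)^m" if "n \<le> m"
    using that by (induction m) (auto simp: le_Suc_eq)
  then show ?thesis by (cases "n \<le> m") simp_all
qed

context
  fixes sc :: "'k::real_normed_field \<Rightarrow> 'v::ab_group_add \<Rightarrow> 'v"
    and V :: "'v set" and g :: "'v \<Rightarrow> real" and w :: "nat \<Rightarrow> 'v" and A :: real
  assumes module: "module sc" and V: "lin_subspace sc V" and g: "is_seminorm_on sc V g"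
    and w: "\<And>n. w n \<in> V" and wb: "\<And>n. g (w n) \<le> A * (1/2)^n"
begin

lemma geometric_partial_sums_tail:
  assumes "n \<le> m" shows "g ((\<Sum>k<m. w k) - (\<Sum>k<n. w k)) \<le> 2 * A * (1/2)^n"
proof -
  have A: "0 \<le> A" using seminorm_nonneg[OF module V g w, of 0] wb[of 0] by simp
  have "(\<Sum>k<m. w k) - (\<Sum>k<n. w k) = (\<Sum>k\<in>{n..<m}. w k)"
    unfolding lessThan_atLeast0 using sum_diff_nat_ivl[OF _ assms, of 0 w] by simp
  then have "g ((\<Sum>k<m. w k) - (\<Sum>k<n. w k)) \<le> (\<Sum>k\<in>{n..<m}. g (w k))"
    using seminorm_sum_le[OF module V g w] by simp
  also have "\<dots> \<le> A * (\<Sum>k\<in>{n..<m}. (1/2::real)^k)" by (simp add: sum_distrib_left sum_mono wb)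
  also have "\<dots> \<le> A * (2 * (1/2)^n)" by (rule mult_left_mono[OF sum_half_powers_le A])
  finally show ?thesis by simp
qed

lemma geometric_partial_sums_cauchy:
  "\<forall>\<epsilon>>0. \<exists>N. \<forall>m\<ge>N. \<forall>n\<ge>N. g ((\<Sum>k<m. w k) - (\<Sum>k<n. w k)) < \<epsilon>"
proof (intro allI impI)
  fix \<epsilon> :: real assume "0 < \<epsilon>"
  have A: "0 \<le> A" using seminorm_nonneg[OF module V g w, of 0] wb[of 0] by simp
  then obtain N where N: "(1/2::real)^N < \<epsilon> / (2 * A + 1)"
    using real_arch_pow_inv[of "\<epsilon> / (2 * A + 1)" "1/2"] \<open>0 < \<epsilon>\<close> by auto
  have small: "2 * A * (1/2)^n < \<epsilon>" if "N \<le> n" for n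
  proof -
    have "2 * A * (1/2)^n \<le> 2 * A * (1/2)^N" using that A by (simp add: mult_left_mono power_decreasing)
    also have "\<dots> \<le> 2 * A * (\<epsilon> / (2 * A + 1))" using N A by (intro mult_left_mono) simp_all
    also have "\<dots> < \<epsilon>" using \<open>0 < \<epsilon>\<close> A by (simp add: field_simps)
    finally show ?thesis .
  qed
  have "g ((\<Sum>k<m. w k) - (\<Sum>k<n. w k)) < \<epsilon>" if "N \<le> m" "N \<le> n" for m n
  proof (cases "n \<le> m")
    case True then show ?thesis using geometric_partial_sums_tail[OF True] small[OF that(2)] by simp
  next
    case False
    have "g ((\<Sum>k<m. w k) - (\<Sum>k<n. w k)) = g ((\<Sum>k<n. w k) - (\<Sum>k<m. w k))"
      using lin_subspace_sum[OF module V w] by (intro seminorm_diff_commute[OF module V g])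
    then show ?thesis using False geometric_partial_sums_tail[of m n] small[OF that(1)] by simp
  qed
  then show "\<exists>N. \<forall>m\<ge>N. \<forall>n\<ge>N. g ((\<Sum>k<m. w k) - (\<Sum>k<n. w k)) < \<epsilon>" by blast
qed

end

lemma banach_geometric_series:
  fixes sc :: "'k::real_normed_field \<Rightarrow> 'v::ab_group_add \<Rightarrow> 'v"
  assumes module: "module sc" and ban: "sn_banach sc V g"
    and w: "\<And>n. w n \<in> V" and wb: "\<And>n. g (w n) \<le> A * (1/2)^n"
  shows "\<exists>e\<in>V. (\<lambda>N. g ((\<Sum>n<N. w n) - e)) \<longlonglongrightarrow> 0 \<and> g e \<le> 2 * A"
proof -
  have V: "lin_subspace sc V" and gsn: "is_seminorm_on sc V g"
    using ban unfolding sn_banach_def by blast+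
  define S where "S N = (\<Sum>n<N. w n)" for N
  have SV: "S N \<in> V" for N unfolding S_def by (rule lin_subspace_sum[OF module V w])
  have complete: "(\<forall>n. s n \<in> V) \<and> (\<forall>\<epsilon>>0. \<exists>N. \<forall>m\<ge>N. \<forall>n\<ge>N. g (s m - s n) < \<epsilon>)
      \<longrightarrow> (\<exists>x\<in>V. (\<lambda>n. g (s n - x)) \<longlonglongrightarrow> 0)" for s
    using ban unfolding sn_banach_def by blast
  obtain e where e: "e \<in> V" and lim: "(\<lambda>n. g (S n - e)) \<longlonglongrightarrow> 0"
    using complete[of S] SV geometric_partial_sums_cauchy[OF module V gsn w wb] unfolding S_def by blast
  have "g e - 2 * A \<le> g (S N - e)" for N
  proof -
    have "g (S N + (e - S N)) \<le> g (S N) + g (e - S N)"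
      using gsn SV lin_subspace_diff[OF module V e SV] unfolding is_seminorm_on_def by blast
    moreover have "g (S N) \<le> 2 * A"
      using geometric_partial_sums_tail[OF module V gsn w wb, of 0 N] by (simp add: S_def)
    moreover have "g (e - S N) = g (S N - e)" by (rule seminorm_diff_commute[OF module V gsn e SV])
    ultimately show ?thesis by simp
  qed
  then have "g e - 2 * A \<le> 0" by (intro LIMSEQ_le_const[OF lim]) auto
  then show ?thesis using e lim unfolding S_def by auto
qed

section \<open>Expanding dual functionals in weighted point evaluations\<close>

locale fixing_set =
  fixes Fs :: "('w \<Rightarrow> 'k::{real_normed_field,euclidean_space}) set"
    and qF :: "'i \<Rightarrow> ('w \<Rightarrow> 'k) \<Rightarrow> real"
    and TK :: "('w \<Rightarrow> 'k) \<Rightarrow> 'x \<Rightarrow> 'k" and \<nu> :: "'x \<Rightarrow> real" and U :: "'x set"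
  assumes F_lcHs: "lcHs (fscale (*)) Fs qF"
    and TK_lin: "lin_on (fscale (*)) (fscale (*)) Fs TK"
    and TKx_dual: "\<And>x. TKx Fs TK x \<in> Fdual Fs qF"
    and weight: "\<And>x. 0 < \<nu> x"
    and banach: "sn_banach (fscale (*)) (Fnu Fs TK \<nu>) (Fnu_norm TK \<nu>)"
    and ball_compact: "sn_compact Fs qF (ball_Fnu Fs TK \<nu>)"
    and fixU: "fixes_topology Fs TK \<nu> U"
begin

sublocale F: seminormed_space "fscale (*)" Fs qF
  by (rule seminormed_space.intro[OF module_fscale[OF module_mult] F_lcHs])

abbreviation "Fn \<equiv> Fnu Fs TK \<nu>"
abbreviation "N \<equiv> Fnu_norm TK \<nu>"
abbreviation "B \<equiv> ball_Fnu Fs TK \<nu>"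
abbreviation "Y \<equiv> Fdual Fs qF"

lemma module: "module (fscale (*) :: 'k \<Rightarrow> ('w \<Rightarrow> 'k) \<Rightarrow> _)"
  by (rule module_fscale[OF module_mult])

lemma Fn_subset: "Fn \<subseteq> Fs"
  unfolding Fnu_def by blast

lemma Fn_subspace: "lin_subspace (fscale (*)) Fn"
  using banach by (simp add: sn_banach_def)

lemma N_seminorm: "is_seminorm_on (fscale (*)) Fn N"
  using banach by (simp add: sn_banach_def)

lemma N_eq_0: "b \<in> Fn \<Longrightarrow> N b = 0 \<Longrightarrow> b = 0"
  using banach by (simp add: sn_banach_def)

lemma N_nonneg: "b \<in> Fn \<Longrightarrow> 0 \<le> N b"
  by (rule seminorm_nonneg[OF module Fn_subspace N_seminorm])

lemma N_scale: "b \<in> Fn \<Longrightarrow> N (fscale (*) c b) = norm c * N b"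
  using N_seminorm by (simp add: is_seminorm_on_def)

lemma TK_scale: "b \<in> Fs \<Longrightarrow> TK (fscale (*) c b) x = c * TK b x"
  using TK_lin by (simp add: lin_on_def fscale_def)

lemma TK_le_N: "b \<in> Fn \<Longrightarrow> norm (TK b x) * \<nu> x \<le> N b"
  unfolding Fnu_norm_def Fnu_def by (auto intro: cSUP_upper)

lemma TKx_apply: "b \<in> Fs \<Longrightarrow> TKx Fs TK x b = TK b x"
  by (simp add: TKx_def)

lemma ball_subset: "B \<subseteq> Fn"
  unfolding ball_Fnu_def by blast

lemma ball_N: "b \<in> B \<Longrightarrow> N b \<le> 1"
  unfolding ball_Fnu_def by blast

lemma ball_abs_convex: "abs_convex (fscale (*)) B"
  unfolding abs_convex_def
proof (intro ballI allI impI)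
  fix b1 b2 and c1 c2 :: 'k assume b: "b1 \<in> B" "b2 \<in> B" and c: "norm c1 + norm c2 \<le> 1"
  have Fn: "fscale (*) c1 b1 \<in> Fn" "fscale (*) c2 b2 \<in> Fn"
    using b ball_subset Fn_subspace by (auto simp: lin_subspace_def)
  have "N (fscale (*) c1 b1 + fscale (*) c2 b2) \<le> N (fscale (*) c1 b1) + N (fscale (*) c2 b2)"
    using N_seminorm Fn unfolding is_seminorm_on_def by blast
  also have "\<dots> = norm c1 * N b1 + norm c2 * N b2"
    using b ball_subset by (simp add: N_scale subset_iff)
  also have "\<dots> \<le> norm c1 * 1 + norm c2 * 1"
    using b ball_N by (intro add_mono mult_left_mono) auto
  finally show "fscale (*) c1 b1 + fscale (*) c2 b2 \<in> B"
    using c Fn Fn_subspace unfolding ball_Fnu_def lin_subspace_def by auto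
qed

lemma dual_lin: "y \<in> Y \<Longrightarrow> lin_on (fscale (*)) (*) Fs y"
  by (simp add: Fdual_def sn_dual_def)

lemma dual_scale: "y \<in> Y \<Longrightarrow> b \<in> Fs \<Longrightarrow> y (fscale (*) c b) = c * y b"
  using dual_lin by (simp add: lin_on_def)

lemma bound_from_ball:
  assumes hom: "\<And>c b. b \<in> Fn \<Longrightarrow> h (fscale (*) c b) = norm c * h b"
    and ball: "\<And>b. b \<in> B \<Longrightarrow> h b \<le> \<epsilon>" and b: "b \<in> Fn"
  shows "h b \<le> \<epsilon> * N b"
proof (cases "N b = 0")
  case True
  have "fscale (*) 0 b = b" using N_eq_0[OF b True] by (simp add: fscale_def fun_eq_iff)
  then have "h b = norm (0::'k) * h b" using hom[OF b, of 0] by simp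
  then show ?thesis using True by simp
next
  case False
  then have pos: "0 < N b" using N_nonneg[OF b] by simp
  define b' where "b' = fscale (*) (of_real (1 / N b)) b"
  have "b' \<in> Fn" unfolding b'_def using Fn_subspace b by (simp add: lin_subspace_def)
  moreover have "N b' = 1" unfolding b'_def using N_scale[OF b] pos by (simp add: norm_divide)
  ultimately have "h b' \<le> \<epsilon>" using ball unfolding ball_Fnu_def by simp
  moreover have "h b' = h b / N b" unfolding b'_def using hom[OF b] pos by (simp add: norm_divide)
  ultimately show ?thesis using pos by (simp add: field_simps)
qed

definition ball_sup :: "(('w \<Rightarrow> 'k) \<Rightarrow> 'k) \<Rightarrow> real" where
  "ball_sup y = Sup (insert 0 ((\<lambda>b. norm (y b)) ` B))"

lemma ball_sup_bdd: "y \<in> Y \<Longrightarrow> bdd_above (insert 0 ((\<lambda>b. norm (y b)) ` B))"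
  using F.sn_compact_bdd_above[OF ball_compact F.seminorm_lipschitz_dual_norm] by (simp add: Fdual_def)

lemma ball_sup_ge: "y \<in> Y \<Longrightarrow> b \<in> B \<Longrightarrow> norm (y b) \<le> ball_sup y"
  unfolding ball_sup_def by (rule cSup_upper[OF _ ball_sup_bdd]) auto

lemma ball_sup_nonneg: "y \<in> Y \<Longrightarrow> 0 \<le> ball_sup y"
  unfolding ball_sup_def by (rule cSup_upper[OF _ ball_sup_bdd]) auto

lemma ball_sup_le: "0 \<le> \<sigma> \<Longrightarrow> (\<And>b. b \<in> B \<Longrightarrow> norm (y b) \<le> \<sigma>) \<Longrightarrow> ball_sup y \<le> \<sigma>"
  unfolding ball_sup_def by (rule cSup_least) auto

lemma dual_le_ball_sup:
  assumes y: "y \<in> Y" and b: "b \<in> Fn" shows "norm (y b) \<le> ball_sup y * N b"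
proof (rule bound_from_ball[where h = "\<lambda>b. norm (y b)", OF _ _ b])
  fix c b' assume "b' \<in> Fn"
  then show "norm (y (fscale (*) c b')) = norm c * norm (y b')"
    using dual_scale[OF y] Fn_subset by (auto simp: norm_mult)
qed (rule ball_sup_ge[OF y])

definition sup_U :: "('w \<Rightarrow> 'k) \<Rightarrow> real" where
  "sup_U b = Sup (insert 0 ((\<lambda>x. norm (TK b x) * \<nu> x) ` U))"

definition fix_const :: real where
  "fix_const = (SOME C. 0 < C \<and> (\<forall>b\<in>Fn. N b \<le> C * sup_U b))"

lemma fix_const: "0 < fix_const" "\<And>b. b \<in> Fn \<Longrightarrow> N b \<le> fix_const * sup_U b"
proof -
  have "\<exists>C. 0 < C \<and> (\<forall>b\<in>Fn. N b \<le> C * sup_U b)"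
    using fixU unfolding fixes_topology_def sup_U_def by blast
  then have "0 < fix_const \<and> (\<forall>b\<in>Fn. N b \<le> fix_const * sup_U b)"
    unfolding fix_const_def by (rule someI_ex)
  then show "0 < fix_const" "\<And>b. b \<in> Fn \<Longrightarrow> N b \<le> fix_const * sup_U b" by auto
qed

lemma sup_U_bdd:
  assumes "b \<in> Fn" shows "bdd_above (insert 0 ((\<lambda>x. norm (TK b x) * \<nu> x) ` U))"
  unfolding bdd_above_def using TK_le_N[OF assms] by (intro exI[of _ "max 0 (N b)"]) (auto simp: le_max_iff_disj)

definition weighted_eval :: "('w \<Rightarrow> 'k) \<Rightarrow> 'x \<Rightarrow> 'k" where
  "weighted_eval b x = of_real (\<nu> x) * TK b x"

lemma norm_weighted_eval: "norm (weighted_eval b x) = \<nu> x * norm (TK b x)"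
  unfolding weighted_eval_def using weight[of x] by (simp add: norm_mult)

lemma weighted_eval_lin: "lin_on (fscale (*)) (*) Fn (\<lambda>b. weighted_eval b x)"
  unfolding lin_on_def weighted_eval_def
proof (intro conjI ballI allI)
  fix b1 b2 assume "b1 \<in> Fn" "b2 \<in> Fn"
  then have "TK (b1 + b2) = TK b1 + TK b2" using TK_lin Fn_subset unfolding lin_on_def by blast
  then show "of_real (\<nu> x) * TK (b1 + b2) x = of_real (\<nu> x) * TK b1 x + of_real (\<nu> x) * TK b2 x"
    by (simp add: distrib_left)
next
  fix c b assume "b \<in> Fn"
  then show "of_real (\<nu> x) * TK (fscale (*) c b) x = c * (of_real (\<nu> x) * TK b x)"
    using TK_scale Fn_subset by (auto simp: mult.left_commute)
qed

lemma ball_point_estimate: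
  assumes y: "y \<in> Y" and b: "b \<in> B" and large: "\<epsilon> \<le> norm (y b)" and \<epsilon>: "0 < \<epsilon>"
  shows "\<exists>x\<in>U. norm (y b) - fix_const * ball_sup y * norm (weighted_eval b x) < \<epsilon>"
proof -
  define R where "R = fix_const * ball_sup y"
  have bFn: "b \<in> Fn" using b ball_subset by blast
  have "norm (y b) \<le> ball_sup y * N b" by (rule dual_le_ball_sup[OF y bFn])
  also have "\<dots> \<le> ball_sup y * (fix_const * sup_U b)"
    by (rule mult_left_mono[OF fix_const(2)[OF bFn] ball_sup_nonneg[OF y]])
  also have "\<dots> = R * sup_U b" by (simp add: R_def mult_ac)
  finally have "norm (y b) \<le> R * sup_U b" .
  then have le: "\<epsilon> \<le> R * sup_U b" using large by linarith
  then have R: "0 < R" using \<epsilon> fix_const(1) ball_sup_nonneg[OF y]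
    by (cases "R = 0") (simp_all add: R_def zero_less_mult_iff)
  have "sup_U b - \<epsilon> / R < sup_U b" using \<epsilon> R by simp
  then obtain z where z: "z \<in> insert 0 ((\<lambda>x. norm (TK b x) * \<nu> x) ` U)" "sup_U b - \<epsilon> / R < z"
    using less_cSup_iff[OF _ sup_U_bdd[OF bFn]] unfolding sup_U_def by blast
  have "0 \<le> sup_U b - \<epsilon> / R" using le R by (simp add: field_simps)
  then obtain x where x: "x \<in> U" "z = norm (TK b x) * \<nu> x" using z by auto
  have "R * sup_U b - \<epsilon> < R * z" using z(2) R by (simp add: field_simps)
  then show ?thesis
    using x le \<open>norm (y b) \<le> R * sup_U b\<close>
    unfolding R_def norm_weighted_eval by (intro bexI[OF _ x(1)]) (simp add: mult_ac)
qed

definition point_defect :: "(('w \<Rightarrow> 'k) \<Rightarrow> 'k) \<Rightarrow> 'x option \<Rightarrow> ('w \<Rightarrow> 'k) \<Rightarrow> real" where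
  "point_defect y i b = (case i of None \<Rightarrow> norm (y b)
     | Some x \<Rightarrow> norm (y b) + (- (fix_const * ball_sup y * \<nu> x)) * norm (TKx Fs TK x b))"

lemma point_defect_Some:
  "b \<in> Fs \<Longrightarrow> point_defect y (Some x) b = norm (y b) - fix_const * ball_sup y * norm (weighted_eval b x)"
  unfolding point_defect_def by (simp add: TKx_apply norm_weighted_eval mult.assoc)

lemma point_defect_lipschitz:
  assumes y: "y \<in> Y" shows "F.seminorm_lipschitz (point_defect y i)"
proof -
  have y': "y \<in> sn_dual (fscale (*)) Fs qF" and T': "TKx Fs TK x \<in> sn_dual (fscale (*)) Fs qF" for x
    using y TKx_dual by (simp_all add: Fdual_def)
  show ?thesis
  proof (cases i)
    case None
    then show ?thesis unfolding point_defect_def using F.seminorm_lipschitz_dual_norm[OF y'] by simp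
  next
    case (Some x)
    have "point_defect y i = (\<lambda>b. norm (y b) + (- (fix_const * ball_sup y * \<nu> x)) * norm (TKx Fs TK x b))"
      unfolding point_defect_def Some by (rule ext) (simp only: option.case)
    then show ?thesis
      using F.seminorm_lipschitz_add[OF F.seminorm_lipschitz_dual_norm[OF y']
          F.seminorm_lipschitz_scale[OF F.seminorm_lipschitz_dual_norm[OF T']]] by (simp only:)
  qed
qed

lemma ball_covered_by_point_defects:
  assumes y: "y \<in> Y" and \<epsilon>: "0 < \<epsilon>"
  shows "B \<subseteq> (\<Union>i\<in>insert None (Some ` U). {b\<in>Fs. point_defect y i b < \<epsilon>})"
proof
  fix b assume b: "b \<in> B"
  then have bFs: "b \<in> Fs" using ball_subset Fn_subset by blast
  show "b \<in> (\<Union>i\<in>insert None (Some ` U). {b\<in>Fs. point_defect y i b < \<epsilon>})"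
  proof (cases "norm (y b) < \<epsilon>")
    case True then show ?thesis using bFs by (auto simp: point_defect_def)
  next
    case False
    then obtain x where "x \<in> U" "point_defect y (Some x) b < \<epsilon>"
      using ball_point_estimate[OF y b _ \<epsilon>] point_defect_Some[OF bFs] by force
    then show ?thesis using bFs by blast
  qed
qed

lemma ball_finite_points:
  assumes y: "y \<in> Y" and \<epsilon>: "0 < \<epsilon>"
  obtains X where "finite X" "X \<subseteq> U"
    "\<And>b. b \<in> B \<Longrightarrow> norm (y b) \<le> fix_const * ball_sup y * max_norm X (weighted_eval b) + \<epsilon>"
proof -
  define R where "R = fix_const * ball_sup y"
  have R: "0 \<le> R" unfolding R_def using fix_const(1) ball_sup_nonneg[OF y] by simp
  have op: "sn_open Fs qF {b\<in>Fs. point_defect y i b < \<epsilon>}" for i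
    by (rule F.sn_open_sublevel[OF point_defect_lipschitz[OF y]])
  obtain I where I: "I \<subseteq> insert None (Some ` U)" "finite I"
    "B \<subseteq> (\<Union>i\<in>I. {b\<in>Fs. point_defect y i b < \<epsilon>})"
    by (rule F.sn_compact_finite_subcover[OF ball_compact op ball_covered_by_point_defects[OF y \<epsilon>]])
  define X where "X = Some -` I"
  have X: "finite X" "X \<subseteq> U" using I(1,2) by (auto simp: X_def finite_vimageI inj_on_def)
  have "norm (y b) \<le> R * max_norm X (weighted_eval b) + \<epsilon>" if b: "b \<in> B" for b
  proof -
    obtain i where i: "i \<in> I" "b \<in> Fs" "point_defect y i b < \<epsilon>" using I(3) b by blast
    show ?thesis
    proof (cases i)
      case None
      have "0 \<le> R * max_norm X (weighted_eval b)" by (rule mult_nonneg_nonneg[OF R max_norm_nonneg[OF X(1)]])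
      then show ?thesis using i None unfolding point_defect_def by simp
    next
      case (Some x)
      then have "x \<in> X" using i by (simp add: X_def)
      then have "R * norm (weighted_eval b x) \<le> R * max_norm X (weighted_eval b)"
        by (intro mult_left_mono[OF max_norm_ge[OF X(1)] R])
      then show ?thesis using i Some point_defect_Some unfolding R_def by simp
    qed
  qed
  then show ?thesis using that X unfolding R_def by blast
qed

lemma finite_points_estimate:
  assumes y: "y \<in> Y" and \<epsilon>: "0 < \<epsilon>"
  obtains X where "finite X" "X \<subseteq> U"
    "\<And>b. b \<in> Fn \<Longrightarrow> norm (y b) \<le> fix_const * ball_sup y * max_norm X (weighted_eval b) + \<epsilon> * N b"
proof -
  obtain X where X: "finite X" "X \<subseteq> U"
    and ball: "\<And>b. b \<in> B \<Longrightarrow> norm (y b) \<le> fix_const * ball_sup y * max_norm X (weighted_eval b) + \<epsilon>"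
    using ball_finite_points[OF y \<epsilon>] by blast
  let ?h = "\<lambda>b. norm (y b) - fix_const * ball_sup y * max_norm X (weighted_eval b)"
  have "?h (fscale (*) c b) = norm c * ?h b" if "b \<in> Fn" for c b
  proof -
    have b: "b \<in> Fs" using that Fn_subset by blast
    have "weighted_eval (fscale (*) c b) = (\<lambda>x. c * weighted_eval b x)"
      using TK_scale[OF b] by (simp add: weighted_eval_def fun_eq_iff mult_ac)
    then have "max_norm X (weighted_eval (fscale (*) c b)) = norm c * max_norm X (weighted_eval b)"
      using max_norm_mult[OF X(1)] by simp
    moreover have "norm (y (fscale (*) c b)) = norm c * norm (y b)"
      using dual_scale[OF y b] by (simp add: norm_mult)
    ultimately show ?thesis by (simp add: algebra_simps)
  qed
  then have "?h b \<le> \<epsilon> * N b" if "b \<in> Fn" for b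
    using bound_from_ball[of ?h \<epsilon>] ball that by force
  then show ?thesis using that X by force
qed

definition halving_step :: "(('w \<Rightarrow> 'k) \<Rightarrow> 'k) \<Rightarrow> 'x set \<Rightarrow> ('x \<Rightarrow> 'k) \<Rightarrow> bool" where
  "halving_step y X a \<longleftrightarrow> finite X \<and> X \<subseteq> U \<and> (\<Sum>x\<in>X. norm (a x)) \<le> fix_const * ball_sup y \<and>
     (\<forall>b\<in>Fn. norm (y b - (\<Sum>x\<in>X. a x * weighted_eval b x)) \<le> ball_sup y / 2 * N b)"

lemma halving_step_exists:
  assumes y: "y \<in> Y" shows "\<exists>X a. halving_step y X a"
proof (cases "ball_sup y = 0")
  case True
  then show ?thesis unfolding halving_step_def
    using dual_le_ball_sup[OF y] by (intro exI[of _ "{}"]) simp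
next
  case False
  then have \<sigma>: "0 < ball_sup y" using ball_sup_nonneg[OF y] by simp
  obtain X where X: "finite X" "X \<subseteq> U"
    and dom: "\<And>b. b \<in> Fn \<Longrightarrow> norm (y b) \<le> fix_const * ball_sup y * max_norm X (weighted_eval b) + ball_sup y / 2 * N b"
    using finite_points_estimate[OF y, of "ball_sup y / 2"] \<sigma> by auto
  have ylin: "lin_on (fscale (*)) (*) Fn y" using dual_lin[OF y] Fn_subset unfolding lin_on_def by blast
  have "0 \<le> fix_const * ball_sup y" "0 \<le> ball_sup y / 2" using fix_const(1) \<sigma> by simp_all
  then interpret approx: dominated_functional "fscale (*)" Fn y "\<lambda>x b. weighted_eval b x" N X
      "fix_const * ball_sup y" "ball_sup y / 2"
    by (intro dominated_functional.intro[OF module Fn_subspace ylin weighted_eval_lin N_seminorm X(1)] dom)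
  show ?thesis unfolding halving_step_def using X approx.approximating_coefficients by blast
qed

definition residual :: "(('w \<Rightarrow> 'k) \<Rightarrow> 'k) \<Rightarrow> 'x set \<Rightarrow> ('x \<Rightarrow> 'k) \<Rightarrow> ('w \<Rightarrow> 'k) \<Rightarrow> 'k" where
  "residual y X a = (\<lambda>b. y b - (\<Sum>x\<in>X. (a x * of_real (\<nu> x)) * TKx Fs TK x b))"

lemma residual_apply: "b \<in> Fs \<Longrightarrow> residual y X a b = y b - (\<Sum>x\<in>X. a x * weighted_eval b x)"
  unfolding residual_def weighted_eval_def by (simp add: TKx_apply mult.assoc)

lemma residual_dual:
  assumes y: "y \<in> Y" and X: "finite X" shows "residual y X a \<in> Y"
proof -
  have "(\<lambda>b. \<Sum>x\<in>X. (a x * of_real (\<nu> x)) * TKx Fs TK x b) \<in> sn_dual (fscale (*)) Fs qF"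
    using X TKx_dual by (intro F.sn_dual_sum F.sn_dual_scale) (simp_all add: Fdual_def)
  then have "(\<lambda>b. y b + (- 1) * (\<Sum>x\<in>X. (a x * of_real (\<nu> x)) * TKx Fs TK x b)) \<in> sn_dual (fscale (*)) Fs qF"
    using y by (intro F.sn_dual_add F.sn_dual_scale) (simp_all add: Fdual_def)
  then show ?thesis unfolding residual_def Fdual_def by simp
qed

lemma ball_sup_residual:
  assumes y: "y \<in> Y" and step: "halving_step y X a"
  shows "ball_sup (residual y X a) \<le> ball_sup y / 2"
proof (rule ball_sup_le)
  fix b assume b: "b \<in> B"
  then have bFn: "b \<in> Fn" using ball_subset by blast
  then have "norm (residual y X a b) \<le> ball_sup y / 2 * N b"
    using step Fn_subset residual_apply[of b y X a] unfolding halving_step_def by auto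
  also have "\<dots> \<le> ball_sup y / 2" using ball_N[OF b] ball_sup_nonneg[OF y] by (simp add: mult_left_le)
  finally show "norm (residual y X a b) \<le> ball_sup y / 2" .
qed (use ball_sup_nonneg[OF y] in simp)

definition next_residual :: "(('w \<Rightarrow> 'k) \<Rightarrow> 'k) \<Rightarrow> ('w \<Rightarrow> 'k) \<Rightarrow> 'k" where
  "next_residual y = (let (X, a) = SOME (X, a). halving_step y X a in residual y X a)"

definition residual_seq :: "(('w \<Rightarrow> 'k) \<Rightarrow> 'k) \<Rightarrow> nat \<Rightarrow> ('w \<Rightarrow> 'k) \<Rightarrow> 'k" where
  "residual_seq y n = (next_residual ^^ n) y"

definition step_points :: "(('w \<Rightarrow> 'k) \<Rightarrow> 'k) \<Rightarrow> nat \<Rightarrow> 'x set" where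
  "step_points y n = fst (SOME (X, a). halving_step (residual_seq y n) X a)"

definition step_coeffs :: "(('w \<Rightarrow> 'k) \<Rightarrow> 'k) \<Rightarrow> nat \<Rightarrow> 'x \<Rightarrow> 'k" where
  "step_coeffs y n = snd (SOME (X, a). halving_step (residual_seq y n) X a)"

lemma residual_seq_Suc:
  "residual_seq y (Suc n) = residual (residual_seq y n) (step_points y n) (step_coeffs y n)"
  unfolding residual_seq_def step_points_def step_coeffs_def next_residual_def
  by (simp add: case_prod_beta' Let_def)

lemma residual_seq_step:
  assumes "residual_seq y n \<in> Y"
  shows "halving_step (residual_seq y n) (step_points y n) (step_coeffs y n)"
proof -
  have "\<exists>p. halving_step (residual_seq y n) (fst p) (snd p)" using halving_step_exists[OF assms] by auto
  then show ?thesis unfolding step_points_def step_coeffs_def case_prod_beta' by (rule someI_ex)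
qed

lemma residual_seq_dual: "y \<in> Y \<Longrightarrow> residual_seq y n \<in> Y"
proof (induction n)
  case (Suc n)
  then show ?case using residual_seq_step[OF Suc.IH] residual_dual
    unfolding residual_seq_Suc halving_step_def by blast
qed (simp add: residual_seq_def)

lemma halving_step_seq: "y \<in> Y \<Longrightarrow> halving_step (residual_seq y n) (step_points y n) (step_coeffs y n)"
  by (rule residual_seq_step[OF residual_seq_dual])

lemma ball_sup_residual_seq: "y \<in> Y \<Longrightarrow> ball_sup (residual_seq y n) \<le> ball_sup y * (1/2)^n"
proof (induction n)
  case (Suc n)
  have "ball_sup (residual_seq y (Suc n)) \<le> ball_sup (residual_seq y n) / 2"
    unfolding residual_seq_Suc by (rule ball_sup_residual[OF residual_seq_dual halving_step_seq]) fact+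
  then show ?case using Suc by simp
qed (simp add: residual_seq_def)

end

section \<open>The extension\<close>

locale extension_setting = fixing_set Fs qF TK \<nu> U
  for Fs :: "('w \<Rightarrow> 'k::{real_normed_field,euclidean_space}) set"
    and qF :: "'i \<Rightarrow> ('w \<Rightarrow> 'k) \<Rightarrow> real"
    and TK :: "('w \<Rightarrow> 'k) \<Rightarrow> 'x \<Rightarrow> 'k" and \<nu> :: "'x \<Rightarrow> real" and U :: "'x set" +
  fixes smul :: "'k \<Rightarrow> 'e::ab_group_add \<Rightarrow> 'e" and p :: "'a \<Rightarrow> 'e \<Rightarrow> real"
    and G :: "('e \<Rightarrow> 'k) set" and f :: "'x \<Rightarrow> 'e"
  assumes E_module: "module smul" and E_lcHs: "lcHs smul UNIV p"
    and E_lc: "locally_complete smul p"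
    and G_sub: "G \<subseteq> sn_dual smul UNIV p" and G_sep: "separating G"
    and f_in: "f \<in> FnuG_lb smul p Fs TK \<nu> G U"
begin

sublocale E: seminormed_space smul UNIV p
  by (rule seminormed_space.intro[OF E_module E_lcHs])

definition weighted_f :: "'x \<Rightarrow> 'e" where
  "weighted_f x = smul (of_real (\<nu> x)) (f x)"

definition f_bound :: "'a \<Rightarrow> real" where
  "f_bound i = Sup (insert 0 ((\<lambda>x. p i (weighted_f x)) ` U))"

abbreviation "Df \<equiv> E.disc f_bound"
abbreviation "span_Df \<equiv> \<Union>n::nat. smul (of_nat n) ` Df"
abbreviation "gauge_Df \<equiv> gauge_fn smul Df"

lemma f_bound_bdd: "bdd_above (insert 0 ((\<lambda>x. p i (weighted_f x)) ` U))"
proof -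
  have "sn_bounded UNIV p (weighted_f ` U)" using f_in unfolding FnuG_lb_def weighted_f_def[abs_def] by simp
  then obtain C where "\<forall>v\<in>weighted_f ` U. p i v \<le> C" unfolding sn_bounded_def by blast
  then have "bdd_above ((\<lambda>x. p i (weighted_f x)) ` U)" by (intro bdd_aboveI2[of _ _ C]) blast
  then show ?thesis by simp
qed

lemma norm_residual_seq_le:
  assumes y: "y \<in> Y" and b: "b \<in> Fn"
  shows "norm (residual_seq y n b) \<le> ball_sup y * N b * (1/2)^n"
proof -
  have "norm (residual_seq y n b) \<le> ball_sup (residual_seq y n) * N b"
    by (rule dual_le_ball_sup[OF residual_seq_dual[OF y] b])
  also have "\<dots> \<le> ball_sup y * (1/2)^n * N b"
    by (rule mult_right_mono[OF ball_sup_residual_seq[OF y] N_nonneg[OF b]])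
  finally show ?thesis by (simp add: mult_ac)
qed

lemma weighted_f_le: "x \<in> U \<Longrightarrow> p i (weighted_f x) \<le> f_bound i"
  unfolding f_bound_def by (rule cSup_upper[OF _ f_bound_bdd]) simp

lemma f_bound_nonneg: "0 \<le> f_bound i"
  unfolding f_bound_def by (rule cSup_upper[OF _ f_bound_bdd]) simp

lemma weighted_f_in_disc: "x \<in> U \<Longrightarrow> weighted_f x \<in> Df"
  unfolding E.disc_def using weighted_f_le by blast

lemma zero_in_Df: "0 \<in> Df"
  by (rule E.zero_in_disc[OF f_bound_nonneg])

text \<open>Local completeness of \<open>E\<close> is used exactly here.\<close>
lemma span_Df_banach: "sn_banach smul span_Df gauge_Df"
proof -
  have "Df \<noteq> {} \<and> sn_closed UNIV p Df \<and> sn_bounded UNIV p Df \<and> abs_convex smul Df"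
    using zero_in_Df E.disc_closed[of f_bound] E.disc_bounded[of f_bound]
      E.disc_abs_convex[of f_bound, OF f_bound_nonneg] by blast
  moreover have "Df \<noteq> {} \<and> sn_closed UNIV p Df \<and> sn_bounded UNIV p Df \<and> abs_convex smul Df
      \<longrightarrow> sn_banach smul span_Df gauge_Df"
    using E_lc unfolding locally_complete_def by (rule spec)
  ultimately show ?thesis by (rule rev_mp)
qed

lemma span_Df_subspace: "lin_subspace smul span_Df"
  using span_Df_banach by (simp add: sn_banach_def)

lemma gauge_Df_seminorm: "is_seminorm_on smul span_Df gauge_Df"
  using span_Df_banach by (simp add: sn_banach_def)

lemma Df_subset_span: "Df \<subseteq> span_Df"
proof
  fix d assume d: "d \<in> Df"
  have "d = smul (of_nat 1) d" using module.scale_one[OF E_module] by simp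
  then have "d \<in> smul (of_nat 1) ` Df" using d by (rule image_eqI)
  then show "d \<in> span_Df" by blast
qed

lemma weighted_f_combination:
  assumes "X \<subseteq> U"
  shows "(\<Sum>x\<in>X. smul (c x) (weighted_f x)) \<in> span_Df"
    and "gauge_Df (\<Sum>x\<in>X. smul (c x) (weighted_f x)) \<le> (\<Sum>x\<in>X. norm (c x))"
proof -
  have w: "smul (c x) (weighted_f x) \<in> span_Df" if "x \<in> X" for x
  proof -
    have "weighted_f x \<in> Df" using that assms by (intro weighted_f_in_disc) blast
    then show ?thesis by (intro lin_subspace_scale[OF span_Df_subspace] subsetD[OF Df_subset_span])
  qed
  then show "(\<Sum>x\<in>X. smul (c x) (weighted_f x)) \<in> span_Df"
    by (rule lin_subspace_sum[OF E_module span_Df_subspace])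
  have "gauge_Df (\<Sum>x\<in>X. smul (c x) (weighted_f x)) \<le> (\<Sum>x\<in>X. gauge_Df (smul (c x) (weighted_f x)))"
    using w by (rule seminorm_sum_le[OF E_module span_Df_subspace gauge_Df_seminorm])
  also have "\<dots> \<le> (\<Sum>x\<in>X. norm (c x))"
  proof (rule sum_mono)
    fix x assume "x \<in> X"
    then have "weighted_f x \<in> Df" using assms weighted_f_in_disc by blast
    then have "gauge_Df (smul (c x) (weighted_f x)) = norm (c x) * gauge_Df (weighted_f x)"
      by (intro seminorm_scale[OF gauge_Df_seminorm] subsetD[OF Df_subset_span])
    also have "\<dots> \<le> norm (c x)"
      using gauge_fn_le_one[OF E_module \<open>weighted_f x \<in> Df\<close>] by (simp add: mult_left_le)
    finally show "gauge_Df (smul (c x) (weighted_f x)) \<le> norm (c x)" .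
  qed
  finally show "gauge_Df (\<Sum>x\<in>X. smul (c x) (weighted_f x)) \<le> (\<Sum>x\<in>X. norm (c x))" .
qed

lemma p_le_gauge_Df:
  assumes "v \<in> span_Df" shows "p i v \<le> f_bound i * gauge_Df v"
proof (rule gauge_fn_bound[OF E_module zero_in_Df assms f_bound_nonneg])
  fix t :: real and w
  show "p i (smul (of_real t) w) = t * p i w" if "0 < t"
    using seminorm_scale[OF E.seminorm[of i] UNIV_I] that by simp
qed (simp add: E.disc_def)

lemma G_lin: "e' \<in> G \<Longrightarrow> lin_on smul (*) UNIV e'"
  using G_sub by (auto simp: sn_dual_def)

lemma G_gauge_Df_bound:
  assumes e': "e' \<in> G" obtains K where "0 \<le> K" "\<And>v. v \<in> span_Df \<Longrightarrow> norm (e' v) \<le> K * gauge_Df v"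
proof -
  have "e' \<in> sn_dual smul UNIV p" using e' G_sub by blast
  then obtain J C where J: "finite J" "0 \<le> C" "\<And>v. v \<in> UNIV \<Longrightarrow> norm (e' v) \<le> C * (\<Sum>i\<in>J. p i v)"
    using E.sn_dual_bound by blast
  define K where "K = C * (\<Sum>i\<in>J. f_bound i)"
  have K: "0 \<le> K" unfolding K_def using J(2) f_bound_nonneg by (simp add: sum_nonneg)
  have bound: "norm (e' d) \<le> K" if d: "d \<in> Df" for d
  proof -
    have "(\<Sum>i\<in>J. p i d) \<le> (\<Sum>i\<in>J. f_bound i)" using d by (intro sum_mono) (simp add: E.disc_def)
    then have "C * (\<Sum>i\<in>J. p i d) \<le> K" unfolding K_def by (rule mult_left_mono[OF _ J(2)])
    then show ?thesis using J(3)[OF UNIV_I, of d] by linarith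
  qed
  have hom: "norm (e' (smul (of_real t) w)) = t * norm (e' w)" if "0 < t" for t w
    using G_lin[OF e'] that by (simp add: lin_on_def norm_mult)
  have "norm (e' v) \<le> K * gauge_Df v" if "v \<in> span_Df" for v
    by (rule gauge_fn_bound[where \<phi> = "\<lambda>v. norm (e' v)", OF E_module zero_in_Df that K hom bound])
  then show ?thesis using K that by blast
qed

definition G_rep :: "('e \<Rightarrow> 'k) \<Rightarrow> 'w \<Rightarrow> 'k" where
  "G_rep e' = (SOME g. g \<in> Fn \<and> (\<forall>x\<in>U. TK g x = e' (f x)))"

lemma G_rep:
  assumes "e' \<in> G" shows "G_rep e' \<in> Fn \<and> (\<forall>x\<in>U. TK (G_rep e') x = e' (f x))"
proof -
  have "\<exists>g. g \<in> Fn \<and> (\<forall>x\<in>U. TK g x = e' (f x))"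
    using f_in assms unfolding FnuG_lb_def FnuG_def by blast
  then show ?thesis unfolding G_rep_def by (rule someI_ex)
qed

lemma G_add: "e' \<in> G \<Longrightarrow> e' (u + v) = e' u + e' v"
  using G_lin by (simp add: lin_on_def)

lemma G_scale: "e' \<in> G \<Longrightarrow> e' (smul c v) = c * e' v"
  using G_lin by (simp add: lin_on_def)

lemma G_diff: "e' \<in> G \<Longrightarrow> e' (u - v) = e' u - e' v"
  by (rule lin_on_diff[OF E_module E.subspace G_lin]) simp_all

lemma G_sum: "e' \<in> G \<Longrightarrow> e' (\<Sum>n\<in>A. h n) = (\<Sum>n\<in>A. e' (h n))"
  by (rule lin_on_sum[OF E_module E.subspace G_lin]) simp_all

lemma G_eq_imp_eq:
  assumes "\<And>e'. e' \<in> G \<Longrightarrow> e' u = e' v" shows "u = v"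
proof -
  have "\<forall>e'\<in>G. e' (u - v) = 0" using assms G_diff by fastforce
  then have "u - v = 0" using G_sep unfolding separating_def by blast
  then show ?thesis by simp
qed

definition series_term :: "(('w \<Rightarrow> 'k) \<Rightarrow> 'k) \<Rightarrow> nat \<Rightarrow> 'e" where
  "series_term y n = (\<Sum>x\<in>step_points y n. smul (step_coeffs y n x) (weighted_f x))"

lemma series_term:
  assumes y: "y \<in> Y"
  shows "series_term y n \<in> span_Df" and "gauge_Df (series_term y n) \<le> fix_const * ball_sup y * (1/2)^n"
proof -
  have step: "step_points y n \<subseteq> U" "(\<Sum>x\<in>step_points y n. norm (step_coeffs y n x)) \<le> fix_const * ball_sup (residual_seq y n)"
    using halving_step_seq[OF y, of n] unfolding halving_step_def by auto
  show "series_term y n \<in> span_Df" unfolding series_term_def by (rule weighted_f_combination(1)[OF step(1)])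
  have "gauge_Df (series_term y n) \<le> fix_const * ball_sup (residual_seq y n)"
    unfolding series_term_def using weighted_f_combination(2)[OF step(1)] step(2) by (rule order_trans)
  also have "\<dots> \<le> fix_const * (ball_sup y * (1/2)^n)"
    using ball_sup_residual_seq[OF y] fix_const(1) by (simp add: mult_left_mono)
  finally show "gauge_Df (series_term y n) \<le> fix_const * ball_sup y * (1/2)^n" by (simp add: mult.assoc)
qed

lemma G_series_term:
  assumes y: "y \<in> Y" and e': "e' \<in> G"
  shows "e' (series_term y n) = residual_seq y n (G_rep e') - residual_seq y (Suc n) (G_rep e')"
proof -
  have rep: "G_rep e' \<in> Fs" "\<And>x. x \<in> U \<Longrightarrow> TK (G_rep e') x = e' (f x)"
    using G_rep[OF e'] Fn_subset by auto
  have U: "step_points y n \<subseteq> U" using halving_step_seq[OF y, of n] unfolding halving_step_def by auto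
  have "e' (series_term y n) = (\<Sum>x\<in>step_points y n. step_coeffs y n x * weighted_eval (G_rep e') x)"
    unfolding series_term_def G_sum[OF e']
    using U rep(2) by (intro sum.cong) (auto simp: G_scale[OF e'] weighted_f_def weighted_eval_def)
  then show ?thesis unfolding residual_seq_Suc residual_apply[OF rep(1)] by simp
qed

lemma G_partial_sum:
  assumes y: "y \<in> Y" and e': "e' \<in> G"
  shows "e' (\<Sum>n<m. series_term y n) = y (G_rep e') - residual_seq y m (G_rep e')"
proof -
  have "e' (\<Sum>n<m. series_term y n) = (\<Sum>n<m. residual_seq y n (G_rep e') - residual_seq y (Suc n) (G_rep e'))"
    unfolding G_sum[OF e'] G_series_term[OF y e'] ..
  also have "\<dots> = residual_seq y 0 (G_rep e') - residual_seq y m (G_rep e')"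
    by (rule sum_lessThan_telescope')
  also have "residual_seq y 0 = y" by (simp add: residual_seq_def)
  finally show ?thesis .
qed

lemma G_series_limit:
  assumes y: "y \<in> Y" and e: "e \<in> span_Df"
    and lim: "(\<lambda>m. gauge_Df ((\<Sum>n<m. series_term y n) - e)) \<longlonglongrightarrow> 0" and e': "e' \<in> G"
  shows "e' e = y (G_rep e')"
proof -
  let ?g = "G_rep e'"
  obtain K where K: "0 \<le> K" "\<And>v. v \<in> span_Df \<Longrightarrow> norm (e' v) \<le> K * gauge_Df v"
    using G_gauge_Df_bound[OF e'] by blast
  have bound: "norm (e' e - y ?g) \<le> K * gauge_Df ((\<Sum>n<m. series_term y n) - e) + ball_sup y * N ?g * (1/2)^m"
    for m
  proof -
    have "(\<Sum>n<m. series_term y n) - e \<in> span_Df"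
      using lin_subspace_sum[OF E_module span_Df_subspace series_term(1)[OF y]]
      by (rule lin_subspace_diff[OF E_module span_Df_subspace _ e])
    moreover have "e' e - y ?g = - e' ((\<Sum>n<m. series_term y n) - e) - residual_seq y m ?g"
      using G_partial_sum[OF y e'] G_diff[OF e'] by simp
    then have "norm (e' e - y ?g) \<le> norm (e' ((\<Sum>n<m. series_term y n) - e)) + norm (residual_seq y m ?g)"
      using norm_triangle_ineq4[of "- e' ((\<Sum>n<m. series_term y n) - e)" "residual_seq y m ?g"] by simp
    moreover have "norm (residual_seq y m ?g) \<le> ball_sup y * N ?g * (1/2)^m"
      using norm_residual_seq_le[OF y] G_rep[OF e'] by blast
    ultimately show ?thesis using K(2) by fastforce
  qed
  have "(\<lambda>m. K * gauge_Df ((\<Sum>n<m. series_term y n) - e) + ball_sup y * N ?g * (1/2)^m) \<longlonglongrightarrow> 0"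
    by (intro tendsto_add_zero tendsto_mult_right_zero lim LIMSEQ_power_zero) simp
  then have "norm (e' e - y ?g) \<le> 0" by (rule LIMSEQ_le_const) (use bound in blast)
  then show ?thesis by simp
qed

lemma limit_exists:
  assumes y: "y \<in> Y"
  shows "\<exists>e. (\<forall>e'\<in>G. e' e = y (G_rep e')) \<and> (\<forall>i. p i e \<le> 2 * fix_const * ball_sup y * f_bound i)"
proof -
  obtain e where e: "e \<in> span_Df" and lim: "(\<lambda>m. gauge_Df ((\<Sum>n<m. series_term y n) - e)) \<longlonglongrightarrow> 0"
    and ge: "gauge_Df e \<le> 2 * (fix_const * ball_sup y)"
    using banach_geometric_series[OF E_module span_Df_banach series_term[OF y]] by blast
  have "p i e \<le> 2 * fix_const * ball_sup y * f_bound i" for i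
    using p_le_gauge_Df[OF e, of i] mult_left_mono[OF ge f_bound_nonneg[of i]] by (simp add: mult_ac)
  then show ?thesis using G_series_limit[OF y e lim] by blast
qed

definition ext_map :: "(('w \<Rightarrow> 'k) \<Rightarrow> 'k) \<Rightarrow> 'e" where
  "ext_map y = (if y \<in> Y then THE e. \<forall>e'\<in>G. e' e = y (G_rep e') else 0)"

lemma ext_map:
  assumes y: "y \<in> Y"
  shows "\<And>e'. e' \<in> G \<Longrightarrow> e' (ext_map y) = y (G_rep e')"
    and "\<And>i. p i (ext_map y) \<le> 2 * fix_const * ball_sup y * f_bound i"
proof -
  obtain e where e: "\<forall>e'\<in>G. e' e = y (G_rep e')" "\<And>i. p i e \<le> 2 * fix_const * ball_sup y * f_bound i"
    using limit_exists[OF y] by blast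
  have "(THE e. \<forall>e'\<in>G. e' e = y (G_rep e')) = e"
  proof (rule the_equality)
    fix v assume "\<forall>e'\<in>G. e' v = y (G_rep e')"
    then show "v = e" using e(1) by (intro G_eq_imp_eq) simp
  qed (rule e(1))
  then have "ext_map y = e" using y by (simp add: ext_map_def)
  then show "\<And>e'. e' \<in> G \<Longrightarrow> e' (ext_map y) = y (G_rep e')"
    and "\<And>i. p i (ext_map y) \<le> 2 * fix_const * ball_sup y * f_bound i" using e by auto
qed

lemma ext_map_eq: "y \<in> Y \<Longrightarrow> (\<And>e'. e' \<in> G \<Longrightarrow> e' v = y (G_rep e')) \<Longrightarrow> ext_map y = v"
  by (intro G_eq_imp_eq) (simp add: ext_map(1))

lemma ext_map_eps_prod: "ext_map \<in> eps_prod smul p Fs qF"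
  unfolding eps_prod_def
proof (intro CollectI conjI)
  have Y: "Y = sn_dual (fscale (*)) Fs qF" by (simp add: Fdual_def)
  show "lin_on (fscale (*)) smul Y ext_map"
    unfolding lin_on_def
  proof (intro conjI ballI allI)
    fix y1 y2 assume y: "y1 \<in> Y" "y2 \<in> Y"
    then have "y1 + y2 \<in> Y" using F.sn_dual_add[of y1 y2] unfolding Y by (simp add: plus_fun_def)
    then show "ext_map (y1 + y2) = ext_map y1 + ext_map y2"
      by (rule ext_map_eq) (simp add: G_add ext_map(1)[OF y(1)] ext_map(1)[OF y(2)])
  next
    fix c y assume y: "y \<in> Y"
    then have "fscale (*) c y \<in> Y" using F.sn_dual_scale[of y c] unfolding Y by (simp add: fscale_def)
    then show "ext_map (fscale (*) c y) = smul c (ext_map y)"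
      by (rule ext_map_eq) (simp add: G_scale ext_map(1)[OF y] fscale_def)
  qed
  have "kappa_sn Fs qF B y = ball_sup y" for y
    unfolding kappa_sn_def ball_sup_def using ball_compact ball_abs_convex by simp
  then have "p i (ext_map y) \<le> (2 * fix_const * f_bound i) * (\<Sum>K\<in>{B}. kappa_sn Fs qF K y)" if "y \<in> Y" for i y
    using ext_map(2)[OF that] by (simp add: mult_ac)
  then show "sn_cont Y (kappa_sn Fs qF) p ext_map" unfolding sn_cont_def by blast
qed (simp add: ext_map_def)

lemma ext_map_in_F_eps_nu: "S_map Fs ext_map \<in> F_eps_nu smul p Fs qF TK \<nu>"
  unfolding F_eps_nu_def
proof (intro imageI CollectI conjI ext_map_eps_prod)
  have "p i (ext_map y) \<le> 2 * fix_const * f_bound i" if "y \<in> polar_ball Fs qF TK \<nu>" for i y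
  proof -
    have y: "y \<in> Y" and "\<And>b. b \<in> B \<Longrightarrow> norm (y b) \<le> 1" using that unfolding polar_ball_def by auto
    then have "ball_sup y \<le> 1" by (intro ball_sup_le) auto
    then have "2 * fix_const * ball_sup y * f_bound i \<le> 2 * fix_const * 1 * f_bound i"
      using fix_const(1) f_bound_nonneg by (intro mult_right_mono mult_left_mono) auto
    then show ?thesis using ext_map(2)[OF y, of i] by simp
  qed
  then show "sn_bounded UNIV p (ext_map ` polar_ball Fs qF TK \<nu>)" unfolding sn_bounded_def by blast
qed

lemma ext_map_TKx:
  assumes x: "x \<in> U" shows "ext_map (TKx Fs TK x) = f x"
proof (rule ext_map_eq[OF TKx_dual])
  fix e' assume "e' \<in> G"
  then have "G_rep e' \<in> Fs" "TK (G_rep e') x = e' (f x)" using G_rep x Fn_subset by auto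
  then show "e' (f x) = TKx Fs TK x (G_rep e')" by (simp add: TKx_apply)
qed

end

lemma zero_in_eps_prod:
  assumes "module smul" "lcHs smul UNIV p" shows "(\<lambda>_. 0) \<in> eps_prod smul p Fs qF"
proof -
  have "p i 0 = 0" for i
    using seminorm_zero[OF assms(1)] assms(2) unfolding lcHs_def by blast
  then show ?thesis
    using module.scale_zero_right[OF assms(1)] unfolding eps_prod_def lin_on_def sn_cont_def
    by (auto intro: exI[of _ "{}"])
qed

theorem mainTheorem2:
  fixes smul :: "'k::{real_normed_field,euclidean_space} \<Rightarrow> 'e::ab_group_add \<Rightarrow> 'e"
    and p :: "'a \<Rightarrow> 'e \<Rightarrow> real"
    and G :: "('e \<Rightarrow> 'k) set"
    and Fs :: "('w \<Rightarrow> 'k) set" and qF :: "'i \<Rightarrow> ('w \<Rightarrow> 'k) \<Rightarrow> real"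
    and FE :: "('w \<Rightarrow> 'e) set" and qFE :: "'j \<Rightarrow> ('w \<Rightarrow> 'e) \<Rightarrow> real"
    and TK :: "('w \<Rightarrow> 'k) \<Rightarrow> 'x \<Rightarrow> 'k" and TE :: "('w \<Rightarrow> 'e) \<Rightarrow> 'x \<Rightarrow> 'e"
    and \<nu> :: "'x \<Rightarrow> real" and U :: "'x set" and f :: "'x \<Rightarrow> 'e"
  assumes E_vs: "vector_space smul"
    and E_lcHs: "lcHs smul UNIV p" and E_dir: "directed_family p UNIV"
    and E_lc: "locally_complete smul p"
    and G_sub: "G \<subseteq> sn_dual smul UNIV p" and G_lin: "lin_subspace (fscale (*)) G"
    and G_sep: "separating G"
    and F_lcHs: "lcHs (fscale (*)) Fs qF"
    and FE_lcHs: "lcHs (fscale smul) FE qFE"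
    and delta_dual: "\<forall>x. delta Fs x \<in> Fdual Fs qF"
    and compat: "eps_into_compatible smul p Fs qF FE qFE"
    and TK_lin: "lin_on (fscale (*)) (fscale (*)) Fs TK"
    and TE_lin: "lin_on (fscale smul) (fscale smul) FE TE"
    and cons: "consistent_fam smul p Fs qF FE TE TK"
    and strong: "strong_fam smul p Fs FE TE TK"
    and weight: "\<forall>x. \<nu> x > 0"
    and banach: "sn_banach (fscale (*)) (Fnu Fs TK \<nu>) (Fnu_norm TK \<nu>)"
    and ball_compact: "sn_compact Fs qF (ball_Fnu Fs TK \<nu>)"
    and fixU: "fixes_topology Fs TK \<nu> U"
    and f_in: "f \<in> FnuG_lb smul p Fs TK \<nu> G U"
  shows "\<exists>F\<in>F_eps_nu smul p Fs qF TK \<nu>. \<forall>x\<in>U. TE F x = f x"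
proof -
  \<comment> \<open>Besides consistency, no hypothesis on \<open>\<F>(\<Omega>, E)\<close>, \<open>T\<^sup>E\<close> or \<open>\<delta>\<close> is needed, nor directedness
    of the seminorms or linearity of \<open>G\<close>.\<close>
  have E_module: "module smul" using E_vs by (simp add: module_iff_vector_space)
  have TKx_dual: "TKx Fs TK x \<in> Fdual Fs qF" for x
    using cons zero_in_eps_prod[OF E_module E_lcHs] unfolding consistent_fam_def by blast
  interpret extension_setting Fs qF TK \<nu> U smul p G f
    using F_lcHs TK_lin TKx_dual weight banach ball_compact fixU E_module E_lcHs E_lc G_sub G_sep f_in
    by (intro extension_setting.intro fixing_set.intro extension_setting_axioms.intro) auto
  have "TE (S_map Fs ext_map) x = ext_map (TKx Fs TK x)" for x
    using cons ext_map_eps_prod unfolding consistent_fam_def by blast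
  then have "\<forall>x\<in>U. TE (S_map Fs ext_map) x = f x" using ext_map_TKx by simp
  then show ?thesis using ext_map_in_F_eps_nu by blast
qed

end
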